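(* Let $A$ be a closed densely defined operator in $\mathcal H$ and $G$ a bounded metric operator on $\mathcal H$ (with $G^{-1}$ possibly unbounded). Consider the conditions: (i) $GD(A)=D(A^* )$ and $A^*G\xi=GA\xi$ for every $\xi\in D(A)$ (in particular $A\dashv A^*$ with intertwining operator $G$); (ii) $G^{1/2}AG^{-1/2}$, with domain $G^{1/2}D(A)$, is self-adjoint in $\mathcal H$; (iii) $A$ is self-adjoint in $\mathcal H(G)$ (so $A$ is quasi-self-adjoint); (iv) $GD(A)=D(G^{-1}A^* )$ and $A^*G\xi=GA\xi$ for every $\xi\in D(A)$. Then (i) $\Rightarrow$ (ii) $\Rightarrow$ (iii) $\Rightarrow$ (iv). If moreover the range of $A^*$ is contained in $D(G^{-1})$, then (i)–(iv) are equivalent.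
   Context: A metric operator on a Hilbert space $\mathcal H$ is a self-adjoint operator $G$ with $\langle G\xi,\xi\rangle>0$ for all nonzero $\xi\in D(G)$. For bounded $G$, $\mathcal H(G)$ is the completion of $\mathcal H$ in the norm $\|\xi\|_G=\|G^{1/2}\xi\|$ with inner product $\langle\xi,\eta\rangle_G=\langle G\xi,\eta\rangle$; "$A$ self-adjoint in $\mathcal H(G)$" means $A$, with domain $D(A)$, equals its adjoint $A^\#$ computed in $\mathcal H(G)$. A closed densely defined $A$ is called quasi-self-adjoint if there is a bounded metric operator $G$ such that $A$ is self-adjoint in $\mathcal H(G)$. $D(G^{-1}A^* )=\{\zeta\in D(A^* ): A^*\zeta\in D(G^{-1})\}$. $A\dashv B$ means there is an injective closed densely defined operator $T$ with densely defined inverse such that $D(A)\subset D(T)$, $AD(A)\subset D(T)$, $TD(A)\subset D(B)$ and $BT\xi=TA\xi$ for $\xi\in D(A)$. *)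

theory Defs
  imports "HOL-Analysis.Analysis"
begin

class complex_vector = real_vector +
  fixes scaleC :: "complex \<Rightarrow> 'a \<Rightarrow> 'a" (infixr \<open>*\<^sub>C\<close> 75)
  assumes scaleC_add_right: "a *\<^sub>C (x + y) = a *\<^sub>C x + a *\<^sub>C y"
    and scaleC_add_left: "(a + b) *\<^sub>C x = a *\<^sub>C x + b *\<^sub>C x"
    and scaleC_scaleC: "a *\<^sub>C (b *\<^sub>C x) = (a * b) *\<^sub>C x"
    and scaleC_one: "1 *\<^sub>C x = x"
    and scaleR_scaleC: "scaleR r x = (complex_of_real r) *\<^sub>C x"

class complex_inner = complex_vector + real_normed_vector +
  fixes cinner :: "'a \<Rightarrow> 'a \<Rightarrow> complex"
  assumes cinner_commute: "cinner x y = cnj (cinner y x)"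
    and cinner_add_left: "cinner (x + y) z = cinner x z + cinner y z"
    and cinner_scaleC_left: "cinner (r *\<^sub>C x) y = r * cinner x y"
    and cinner_self_nonneg: "Im (cinner x x) = 0 \<and> 0 \<le> Re (cinner x x)"
    and cinner_eq_zero_iff: "cinner x x = 0 \<longleftrightarrow> x = 0"
    and norm_eq_sqrt_cinner: "norm x = sqrt (Re (cinner x x))"

class chilbert_space = complex_inner + complete_space

definition lin_op :: "'a::complex_vector set \<Rightarrow> ('a \<Rightarrow> 'a) \<Rightarrow> bool" where
  "lin_op D A \<longleftrightarrow> 0 \<in> D
     \<and> (\<forall>x\<in>D. \<forall>y\<in>D. x + y \<in> D \<and> A (x + y) = A x + A y)
     \<and> (\<forall>c. \<forall>x\<in>D. c *\<^sub>C x \<in> D \<and> A (c *\<^sub>C x) = c *\<^sub>C A x)"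

definition densely_defined :: "'a::chilbert_space set \<Rightarrow> ('a \<Rightarrow> 'a) \<Rightarrow> bool" where
  "densely_defined D A \<longleftrightarrow> lin_op D A \<and> closure D = UNIV"

definition closed_op :: "'a::chilbert_space set \<Rightarrow> ('a \<Rightarrow> 'a) \<Rightarrow> bool" where
  "closed_op D A \<longleftrightarrow> lin_op D A \<and> closed {(x, A x) | x. x \<in> D}"

definition adj_dom :: "'a::chilbert_space set \<Rightarrow> ('a \<Rightarrow> 'a) \<Rightarrow> 'a set" where
  "adj_dom D A = {\<eta>. \<exists>\<zeta>. \<forall>\<xi>\<in>D. cinner (A \<xi>) \<eta> = cinner \<xi> \<zeta>}"

definition adj :: "'a::chilbert_space set \<Rightarrow> ('a \<Rightarrow> 'a) \<Rightarrow> 'a \<Rightarrow> 'a" where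
  "adj D A \<eta> = (SOME \<zeta>. \<forall>\<xi>\<in>D. cinner (A \<xi>) \<eta> = cinner \<xi> \<zeta>)"

definition self_adjoint_op :: "'a::chilbert_space set \<Rightarrow> ('a \<Rightarrow> 'a) \<Rightarrow> bool" where
  "self_adjoint_op D A \<longleftrightarrow> densely_defined D A \<and> adj_dom D A = D \<and> (\<forall>\<eta>\<in>D. adj D A \<eta> = A \<eta>)"

definition bounded_clinear_op :: "('a::chilbert_space \<Rightarrow> 'a) \<Rightarrow> bool" where
  "bounded_clinear_op G \<longleftrightarrow> lin_op UNIV G \<and> (\<exists>K. \<forall>x. norm (G x) \<le> norm x * K)"

definition bounded_metric_op :: "('a::chilbert_space \<Rightarrow> 'a) \<Rightarrow> bool" where
  "bounded_metric_op G \<longleftrightarrow> bounded_clinear_op G \<and> self_adjoint_op UNIV G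
     \<and> (\<forall>x. x \<noteq> 0 \<longrightarrow> Im (cinner (G x) x) = 0 \<and> Re (cinner (G x) x) > 0)"

definition op_sqrt :: "('a::chilbert_space \<Rightarrow> 'a) \<Rightarrow> 'a \<Rightarrow> 'a" where
  "op_sqrt G = (THE S. bounded_clinear_op S \<and> self_adjoint_op UNIV S
      \<and> (\<forall>x. Im (cinner (S x) x) = 0 \<and> Re (cinner (S x) x) \<ge> 0) \<and> S \<circ> S = G)"

text \<open>\<open>J\<close> realizes the completion \<open>\<H>(G)\<close> of \<open>\<H>\<close> w.r.t. \<open>\<langle>G\<xi>,\<eta>\<rangle>\<close>:
  a linear map into a Hilbert space, isometric for \<open>\<langle>\<cdot>,\<cdot>\<rangle>_G\<close>, with dense range.\<close>
definition is_G_completion :: "('a::chilbert_space \<Rightarrow> 'a) \<Rightarrow> ('a \<Rightarrow> 'b::chilbert_space) \<Rightarrow> bool" where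
  "is_G_completion G J \<longleftrightarrow> (\<forall>x y. J (x + y) = J x + J y) \<and> (\<forall>c x. J (c *\<^sub>C x) = c *\<^sub>C J x)
     \<and> (\<forall>x y. cinner (J x) (J y) = cinner (G x) y) \<and> closure (range J) = UNIV"

definition cond_i :: "'a::chilbert_space set \<Rightarrow> ('a \<Rightarrow> 'a) \<Rightarrow> ('a \<Rightarrow> 'a) \<Rightarrow> bool" where
  "cond_i D A G \<longleftrightarrow> G ` D = adj_dom D A \<and> (\<forall>\<xi>\<in>D. adj D A (G \<xi>) = G (A \<xi>))"

definition cond_ii :: "'a::chilbert_space set \<Rightarrow> ('a \<Rightarrow> 'a) \<Rightarrow> ('a \<Rightarrow> 'a) \<Rightarrow> bool" where
  "cond_ii D A G \<longleftrightarrow> self_adjoint_op (op_sqrt G ` D) (\<lambda>\<eta>. op_sqrt G (A (inv (op_sqrt G) \<eta>)))"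

text \<open>\<open>A\<close> (with domain \<open>D(A) \<subseteq> \<H> \<subseteq> \<H>(G)\<close>) is self-adjoint in \<open>\<H>(G)\<close>, realized via \<open>J\<close>.\<close>
definition cond_iii :: "'a::chilbert_space set \<Rightarrow> ('a \<Rightarrow> 'a) \<Rightarrow> ('a \<Rightarrow> 'b::chilbert_space) \<Rightarrow> bool" where
  "cond_iii D A J \<longleftrightarrow> self_adjoint_op (J ` D) (\<lambda>k. J (A (inv J k)))"

text \<open>\<open>D(G^{-1}A^*) = {\<zeta> \<in> D(A^*). A^*\<zeta> \<in> D(G^{-1})}\<close>, \<open>D(G^{-1}) = G \<H>\<close>.\<close>
definition cond_iv :: "'a::chilbert_space set \<Rightarrow> ('a \<Rightarrow> 'a) \<Rightarrow> ('a \<Rightarrow> 'a) \<Rightarrow> bool" where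
  "cond_iv D A G \<longleftrightarrow> G ` D = {\<zeta> \<in> adj_dom D A. adj D A \<zeta> \<in> range G}
     \<and> (\<forall>\<xi>\<in>D. adj D A (G \<xi>) = G (A \<xi>))"

end

theory Submission
  imports Defs "HOL-Computational_Algebra.Polynomial"
begin

text \<open>The square root \<open>G\<^sup>1\<^sup>/\<^sup>2\<close> of the bounded metric operator is built as a limit of
  polynomials in \<open>G\<close>, and the completion \<open>J\<close> of \<open>\<H>\<close> to \<open>\<H>(G)\<close> satisfies
  \<open>\<langle>J x, J y\<rangle> = \<langle>G\<^sup>1\<^sup>/\<^sup>2 x, G\<^sup>1\<^sup>/\<^sup>2 y\<rangle>\<close>, so \<open>J G\<^sup>-\<^sup>1\<^sup>/\<^sup>2\<close> is isometric. Conditions (i)--(iii)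
  all express the symmetry \<open>\<langle>A x, G y\<rangle> = \<langle>x, G A y\<rangle>\<close> on \<open>D(A)\<close> together with a maximality
  property, read through \<open>G\<^sup>1\<^sup>/\<^sup>2\<close> resp. \<open>J\<close>; only density of \<open>D(A)\<close> is used, not closedness of \<open>A\<close>.

  The key observation is that \<open>T - i\<close> is onto for self-adjoint \<open>T\<close>. Since \<open>G\<^sup>1\<^sup>/\<^sup>2 A G\<^sup>-\<^sup>1\<^sup>/\<^sup>2\<close>
  takes values in the range of \<open>G\<^sup>1\<^sup>/\<^sup>2\<close>, and \<open>A\<close> viewed in \<open>\<H>(G)\<close> in the range of \<open>J\<close>, each of
  (ii) and (iii) forces \<open>G\<^sup>1\<^sup>/\<^sup>2\<close> and \<open>J\<close> to be onto (their ranges are closed together, being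
  related by an isometry), hence \<open>G\<close> to be onto. Then \<open>D(G\<^sup>-\<^sup>1 A\<^sup>*) = D(A\<^sup>*)\<close>, so (iii) gives (i)
  and thus (iv), while the range hypothesis makes (iv) the same as (i).\<close>

section \<open>Complex inner product spaces\<close>

locale psd_hermitian_form =
  fixes f :: "'a::complex_vector \<Rightarrow> 'a \<Rightarrow> complex"
  assumes add_left: "f (x + y) z = f x z + f y z"
    and scale_left: "f (c *\<^sub>C x) z = c * f x z"
    and hermitian: "f x y = cnj (f y x)"
    and nonneg: "Im (f x x) = 0 \<and> 0 \<le> Re (f x x)"
begin

lemma zero_left [simp]: "f 0 z = 0"
  using add_left[of 0 0 z] by simp

lemma zero_right [simp]: "f z 0 = 0"
  using hermitian[of z 0] by simp

lemma add_right: "f z (x + y) = f z x + f z y"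
  by (metis hermitian add_left complex_cnj_add)

lemma scale_right: "f x (c *\<^sub>C y) = cnj c * f x y"
  by (metis hermitian scale_left complex_cnj_mult)

lemma minus_left: "f (- x) z = - f x z"
  using add_left[of "- x" x z] by (simp add: eq_neg_iff_add_eq_0)

lemma minus_right: "f z (- x) = - f z x"
  by (metis hermitian minus_left complex_cnj_minus)

lemma diff_left: "f (x - y) z = f x z - f y z"
  by (simp only: diff_conv_add_uminus add_left minus_left)

lemma diff_right: "f z (x - y) = f z x - f z y"
  by (simp only: diff_conv_add_uminus add_right minus_right)

lemma self_eq_Re: "f x x = complex_of_real (Re (f x x))"
  using nonneg[of x] by (simp add: complex_eq_iff)

lemma self_diff_scaleC:
  "f (x - s *\<^sub>C y) (x - s *\<^sub>C y) = f x x - cnj s * f x y - s * f y x + s * cnj s * f y y"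
  by (simp only: diff_left diff_right scale_left scale_right) (simp add: algebra_simps)

lemma Re_self_diff_projection:
  fixes x y :: 'a
  assumes "0 < Re (f y y)"
  defines "s \<equiv> f x y / complex_of_real (Re (f y y))"
  shows "Re (f (x - s *\<^sub>C y) (x - s *\<^sub>C y)) = Re (f x x) - (cmod (f x y))\<^sup>2 / Re (f y y)"
proof -
  define a b where "a = f x y" and "b = Re (f y y)"
  have b: "complex_of_real b \<noteq> 0" using assms(1) by (simp add: b_def)
  have "f (x - s *\<^sub>C y) (x - s *\<^sub>C y) = f x x - cnj s * a - s * cnj a + s * cnj s * complex_of_real b"
    unfolding self_diff_scaleC a_def b_def by (metis hermitian self_eq_Re)
  also have "\<dots> = f x x - a * cnj a / complex_of_real b"
    using b by (simp add: s_def a_def [symmetric] b_def [symmetric] field_simps)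
  also have "a * cnj a = complex_of_real ((cmod a)\<^sup>2)"
    by (simp add: complex_norm_square [symmetric])
  finally show ?thesis by (simp add: a_def b_def)
qed

text \<open>A null vector of the form is orthogonal to everything: otherwise moving from \<open>x\<close>
  far enough in its direction would make \<open>f\<close> negative.\<close>
lemma orthogonal_if_self_zero:
  assumes "Re (f y y) = 0"
  shows "f x y = 0"
proof (rule ccontr)
  assume "f x y \<noteq> 0"
  define a where "a = f x y"
  define t where "t = (Re (f x x) + 1) / (2 * (cmod a)\<^sup>2)"
  have a: "0 < (cmod a)\<^sup>2" using \<open>f x y \<noteq> 0\<close> by (simp add: a_def)
  have fyy: "f y y = 0" using assms self_eq_Re[of y] by simp
  have fyx: "f y x = cnj a" by (simp add: a_def hermitian[of y x])
  have "f (x - (complex_of_real t * a) *\<^sub>C y) (x - (complex_of_real t * a) *\<^sub>C y)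
      = f x x - 2 * complex_of_real t * (a * cnj a)"
    by (simp add: self_diff_scaleC fyy fyx a_def [symmetric] algebra_simps)
  also have "a * cnj a = complex_of_real ((cmod a)\<^sup>2)"
    by (simp add: complex_norm_square [symmetric])
  finally have "Re (f (x - (complex_of_real t * a) *\<^sub>C y) (x - (complex_of_real t * a) *\<^sub>C y))
      = Re (f x x) - 2 * t * (cmod a)\<^sup>2"
    by simp
  also have "\<dots> = -1" using a by (simp add: t_def field_simps)
  finally show False using nonneg by (metis neg_0_le_iff_le not_one_le_zero)
qed

lemma Cauchy_Schwarz: "(cmod (f x y))\<^sup>2 \<le> Re (f x x) * Re (f y y)"
proof (cases "Re (f y y) = 0")
  case True
  then show ?thesis using orthogonal_if_self_zero by simp
next
  case False
  then have pos: "0 < Re (f y y)" using nonneg[of y] by simp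
  have "0 \<le> Re (f x x) - (cmod (f x y))\<^sup>2 / Re (f y y)"
    using Re_self_diff_projection[OF pos] nonneg by metis
  then show ?thesis using pos by (simp add: field_simps)
qed

end

lemma psd_hermitian_form_cinner: "psd_hermitian_form (cinner :: 'a::complex_inner \<Rightarrow> 'a \<Rightarrow> complex)"
  by unfold_locales
    (auto simp: cinner_add_left cinner_scaleC_left cinner_self_nonneg intro: cinner_commute)

interpretation cinner: psd_hermitian_form "cinner :: 'a::complex_inner \<Rightarrow> 'a \<Rightarrow> complex"
  by (rule psd_hermitian_form_cinner)

lemma cinner_self_norm: "cinner x x = complex_of_real ((norm x)\<^sup>2)"
  using norm_eq_sqrt_cinner[of x] cinner_self_nonneg[of x] by (simp add: complex_eq_iff)

lemma Re_cinner_self: "Re (cinner x x) = (norm x)\<^sup>2"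
  by (simp add: cinner_self_norm)

lemma norm_cinner_le: "cmod (cinner x y) \<le> norm x * norm y"
proof -
  have "(cmod (cinner x y))\<^sup>2 \<le> (norm x * norm y)\<^sup>2"
    using cinner.Cauchy_Schwarz[of x y] by (simp add: Re_cinner_self power_mult_distrib)
  then show ?thesis by (rule power2_le_imp_le) simp
qed

lemma Re_cinner_le: "Re (cinner x y) \<le> norm x * norm y"
  using complex_Re_le_cmod norm_cinner_le order_trans by blast

lemma scaleC_zero_right [simp]: "c *\<^sub>C (0::'a::complex_vector) = 0"
  using scaleC_add_right[of c "0::'a" 0] by simp

lemma scaleC_zero_left [simp]: "0 *\<^sub>C (x::'a::complex_vector) = 0"
  using scaleR_scaleC[of 0 x] by simp

lemma scaleC_minus_left: "(- c) *\<^sub>C (x::'a::complex_vector) = - (c *\<^sub>C x)"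
  using scaleC_add_left[of "- c" c x] scaleR_scaleC[of 0 x] by (simp add: eq_neg_iff_add_eq_0)

lemma scaleC_minus_right: "c *\<^sub>C (- x::'a::complex_vector) = - (c *\<^sub>C x)"
  using scaleC_add_right[of c "- x" x] by (simp add: eq_neg_iff_add_eq_0)

lemma scaleC_diff_right: "c *\<^sub>C (x - y::'a::complex_vector) = c *\<^sub>C x - c *\<^sub>C y"
  by (simp only: diff_conv_add_uminus scaleC_add_right scaleC_minus_right)

lemma scaleC_scaleR_commute: "c *\<^sub>C (r *\<^sub>R (x::'a::complex_vector)) = r *\<^sub>R (c *\<^sub>C x)"
  by (simp add: scaleR_scaleC scaleC_scaleC mult.commute)

lemma cinner_scaleR_left: "cinner (r *\<^sub>R x) y = complex_of_real r * cinner x y"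
  by (simp add: scaleR_scaleC cinner_scaleC_left)

lemma cinner_scaleR_right: "cinner x (r *\<^sub>R y) = complex_of_real r * cinner x y"
  by (simp add: scaleR_scaleC cinner.scale_right)

lemma norm_scaleC: "norm (c *\<^sub>C (x::'a::complex_inner)) = cmod c * norm x"
proof -
  have "(norm (c *\<^sub>C x))\<^sup>2 = Re (cinner (c *\<^sub>C x) (c *\<^sub>C x))"
    by (simp add: Re_cinner_self)
  also have "\<dots> = Re ((c * cnj c) * cinner x x)"
    by (simp add: cinner_scaleC_left cinner.scale_right mult.assoc mult.left_commute)
  also have "\<dots> = (cmod c * norm x)\<^sup>2"
    by (simp add: cinner_self_norm complex_norm_square [symmetric] power_mult_distrib)
  finally show ?thesis by (simp add: power2_eq_iff_nonneg)
qed

lemma bounded_bilinear_cinner: "bounded_bilinear (cinner :: 'a::complex_inner \<Rightarrow> 'a \<Rightarrow> complex)"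
proof
  fix a a' b b' :: 'a and r :: real
  show "cinner (a + a') b = cinner a b + cinner a' b" by (rule cinner_add_left)
  show "cinner a (b + b') = cinner a b + cinner a b'" by (rule cinner.add_right)
  show "cinner (r *\<^sub>R a) b = r *\<^sub>R cinner a b" by (simp add: cinner_scaleR_left scaleR_conv_of_real)
  show "cinner a (r *\<^sub>R b) = r *\<^sub>R cinner a b" by (simp add: cinner_scaleR_right scaleR_conv_of_real)
  show "\<exists>K. \<forall>a b. norm (cinner a b) \<le> norm a * norm b * K"
    by (rule exI[of _ 1]) (simp add: norm_cinner_le)
qed

lemmas tendsto_cinner = bounded_bilinear.tendsto[OF bounded_bilinear_cinner]

lemma bounded_linear_scaleC: "bounded_linear (\<lambda>x::'a::complex_inner. c *\<^sub>C x)"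
proof
  fix x y :: 'a and r :: real
  show "c *\<^sub>C (x + y) = c *\<^sub>C x + c *\<^sub>C y" by (rule scaleC_add_right)
  show "c *\<^sub>C (r *\<^sub>R x) = r *\<^sub>R (c *\<^sub>C x)" by (rule scaleC_scaleR_commute)
  show "\<exists>K. \<forall>x::'a. norm (c *\<^sub>C x) \<le> norm x * K"
    by (rule exI[of _ "cmod c"]) (simp add: norm_scaleC mult.commute)
qed

lemmas tendsto_scaleC = bounded_linear.tendsto[OF bounded_linear_scaleC]

lemma cinner_sum_left: "cinner (sum f A) y = (\<Sum>a\<in>A. cinner (f a) y)"
  by (induction A rule: infinite_finite_induct) (auto simp: cinner_add_left)

section \<open>Bounded operators and a polynomial calculus\<close>

definition clinear :: "('a::complex_vector \<Rightarrow> 'b::complex_vector) \<Rightarrow> bool" where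
  "clinear f \<longleftrightarrow> (\<forall>x y. f (x + y) = f x + f y) \<and> (\<forall>c x. f (c *\<^sub>C x) = c *\<^sub>C f x)"

definition hermitian :: "('a::complex_inner \<Rightarrow> 'a) \<Rightarrow> bool" where
  "hermitian f \<longleftrightarrow> (\<forall>x y. cinner (f x) y = cinner x (f y))"

definition positive_op :: "('a::complex_inner \<Rightarrow> 'a) \<Rightarrow> bool" where
  "positive_op f \<longleftrightarrow> (\<forall>x. Im (cinner (f x) x) = 0 \<and> 0 \<le> Re (cinner (f x) x))"

definition contraction :: "('a::complex_inner \<Rightarrow> 'a) \<Rightarrow> bool" where
  "contraction f \<longleftrightarrow> (\<forall>x. norm (f x) \<le> norm x)"

lemma clinear_add: "clinear f \<Longrightarrow> f (x + y) = f x + f y"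
  unfolding clinear_def by blast

lemma clinear_scaleC: "clinear f \<Longrightarrow> f (c *\<^sub>C x) = c *\<^sub>C f x"
  unfolding clinear_def by blast

lemma clinear_scaleR: "clinear f \<Longrightarrow> f (r *\<^sub>R x) = r *\<^sub>R f x"
  by (simp add: scaleR_scaleC clinear_scaleC)

lemma clinear_zero: "clinear f \<Longrightarrow> f 0 = 0"
  using clinear_scaleR[of f 0 0] by simp

lemma clinear_diff: "clinear f \<Longrightarrow> f (x - y) = f x - f y"
  using clinear_add[of f x "- y"] clinear_scaleR[of f "-1" y] by simp

lemma clinear_sum: "clinear f \<Longrightarrow> f (sum g A) = (\<Sum>a\<in>A. f (g a))"
  by (induction A rule: infinite_finite_induct) (auto simp: clinear_zero clinear_add)

lemma hermitian_funpow: "hermitian f \<Longrightarrow> hermitian (f ^^ k)"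
  by (induction k) (auto simp: hermitian_def funpow_swap1)

lemma contraction_funpow: "contraction f \<Longrightarrow> contraction (f ^^ k)"
  unfolding contraction_def by (induction k) (auto intro: order_trans)

lemma linear_if_clinear: "clinear f \<Longrightarrow> linear f"
  by (rule linearI) (simp_all add: clinear_add clinear_scaleR)

lemma bounded_linear_if_clinear:
  assumes "clinear T" "\<And>x. norm (T x) \<le> norm x * K"
  shows "bounded_linear T"
  using assms by unfold_locales (auto simp: clinear_add clinear_scaleR)

lemma psd_hermitian_form_op:
  assumes "clinear P" "hermitian P" "positive_op P"
  shows "psd_hermitian_form (\<lambda>u v. cinner (P u) v)"
proof
  fix x y z :: 'a and c
  show "cinner (P (x + y)) z = cinner (P x) z + cinner (P y) z"
    using assms(1) by (simp add: clinear_add cinner_add_left)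
  show "cinner (P (c *\<^sub>C x)) z = c * cinner (P x) z"
    using assms(1) by (simp add: clinear_scaleC cinner_scaleC_left)
  show "cinner (P x) y = cnj (cinner (P y) x)"
    using assms(2) cinner_commute[of x "P y"] by (simp add: hermitian_def)
  show "Im (cinner (P x) x) = 0 \<and> 0 \<le> Re (cinner (P x) x)"
    using assms(3) by (simp add: positive_op_def)
qed

lemma positive_op_eq_zero_if_Re_cinner_zero:
  assumes "clinear P" "hermitian P" "positive_op P" "Re (cinner (P y) y) = 0"
  shows "P y = 0"
proof -
  interpret P: psd_hermitian_form "\<lambda>u v. cinner (P u) v"
    by (rule psd_hermitian_form_op[OF assms(1-3)])
  have "cinner (P y) (P y) = cinner (P (P y)) y"
    using assms(2) by (simp add: hermitian_def)
  also have "\<dots> = 0" by (rule P.orthogonal_if_self_zero[OF assms(4)])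
  finally show ?thesis using cinner_eq_zero_iff by blast
qed

definition poly_op :: "('a::complex_vector \<Rightarrow> 'a) \<Rightarrow> real poly \<Rightarrow> 'a \<Rightarrow> 'a" where
  "poly_op B p x = (\<Sum>k\<le>degree p. coeff p k *\<^sub>R (B ^^ k) x)"

lemma poly_op_eq_sum_lessThan:
  "degree p < N \<Longrightarrow> poly_op B p x = (\<Sum>k<N. coeff p k *\<^sub>R (B ^^ k) x)"
  unfolding poly_op_def by (rule sum.mono_neutral_right[symmetric]) (auto simp: coeff_eq_0)

lemma poly_op_add: "poly_op B (p + q) x = poly_op B p x + poly_op B q x"
proof -
  define N where "N = Suc (degree p + degree q)"
  have "degree (p + q) < N" "degree p < N" "degree q < N"
    using degree_add_le_max[of p q] by (auto simp: N_def)
  then show ?thesis by (simp add: poly_op_eq_sum_lessThan[of _ N] scaleR_add_left sum.distrib)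
qed

lemma poly_op_smult: "poly_op B (smult a p) x = a *\<^sub>R poly_op B p x"
proof -
  define N where "N = Suc (degree p)"
  have "degree (smult a p) < N" "degree p < N"
    using degree_smult_le[of a p] by (auto simp: N_def)
  then show ?thesis by (simp add: poly_op_eq_sum_lessThan[of _ N] scaleR_sum_right)
qed

lemma poly_op_diff: "poly_op B (p - q) x = poly_op B p x - poly_op B q x"
  using poly_op_add[of B "p - q" q x] by (simp add: algebra_simps)

lemma poly_op_0 [simp]: "poly_op B 0 x = 0"
  by (simp add: poly_op_def)

lemma poly_op_pCons:
  assumes "clinear B"
  shows "poly_op B (pCons a p) x = a *\<^sub>R x + B (poly_op B p x)"
proof -
  define N where "N = Suc (degree p)"
  have "degree (pCons a p) < Suc N" "degree p < N"
    by (auto simp: N_def degree_pCons_le le_imp_less_Suc)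
  then show ?thesis
    by (simp add: poly_op_eq_sum_lessThan sum.lessThan_Suc_shift clinear_sum[OF assms]
        clinear_scaleR[OF assms] del: sum.lessThan_Suc)
qed

lemma poly_op_X: "clinear B \<Longrightarrow> poly_op B [:0, 1:] x = B x"
  by (simp add: poly_op_pCons clinear_zero)

lemma poly_op_mult:
  assumes "clinear B"
  shows "poly_op B (p * q) x = poly_op B p (poly_op B q x)"
  by (induction p rule: pCons_induct)
    (simp_all add: mult_pCons_left poly_op_add poly_op_smult poly_op_pCons[OF assms])

lemma clinear_poly_op:
  assumes "clinear B"
  shows "clinear (poly_op B p)"
proof (induction p rule: pCons_induct)
  case 0
  then show ?case by (simp add: clinear_def)
next
  case (pCons a p)
  then show ?case
    by (simp add: clinear_def poly_op_pCons[OF assms] clinear_add[OF assms] clinear_add[OF pCons.IH]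
        clinear_scaleC[OF assms] clinear_scaleC[OF pCons.IH] scaleR_add_right scaleC_add_right
        scaleC_scaleR_commute)
qed

lemma poly_op_commute:
  assumes "clinear B" "linear T" "\<And>x. T (B x) = B (T x)"
  shows "T (poly_op B p x) = poly_op B p (T x)"
  by (induction p arbitrary: x rule: pCons_induct)
    (simp_all add: linear_0[OF assms(2)] poly_op_pCons[OF assms(1)] linear_add[OF assms(2)]
      linear_scale[OF assms(2)] assms(3))

lemma hermitian_poly_op:
  assumes "clinear B" "hermitian B"
  shows "hermitian (poly_op B p)"
proof (induction p rule: pCons_induct)
  case 0
  then show ?case by (simp add: hermitian_def)
next
  case (pCons a p)
  have commute: "B (poly_op B p x) = poly_op B p (B x)" for x
    by (rule poly_op_commute[OF assms(1) linear_if_clinear[OF assms(1)]]) simp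
  show ?case
    using assms(2) pCons.IH
    by (simp add: hermitian_def poly_op_pCons[OF assms(1)] cinner_add_left cinner.add_right
        cinner_scaleR_left cinner_scaleR_right commute)
qed

definition nonneg_coeffs :: "real poly \<Rightarrow> bool" where
  "nonneg_coeffs p \<longleftrightarrow> (\<forall>k. 0 \<le> coeff p k)"

lemma nonneg_coeffs_add: "nonneg_coeffs p \<Longrightarrow> nonneg_coeffs q \<Longrightarrow> nonneg_coeffs (p + q)"
  by (simp add: nonneg_coeffs_def)

lemma nonneg_coeffs_mult: "nonneg_coeffs p \<Longrightarrow> nonneg_coeffs q \<Longrightarrow> nonneg_coeffs (p * q)"
  unfolding nonneg_coeffs_def coeff_mult by (auto intro!: sum_nonneg)

lemma nonneg_coeffs_smult: "0 \<le> a \<Longrightarrow> nonneg_coeffs p \<Longrightarrow> nonneg_coeffs (smult a p)"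
  by (simp add: nonneg_coeffs_def)

lemma nonneg_coeffs_0: "nonneg_coeffs 0"
  by (simp add: nonneg_coeffs_def)

lemma nonneg_coeffs_X: "nonneg_coeffs [:0, 1:]"
  by (simp add: nonneg_coeffs_def coeff_pCons split: nat.split)

lemma positive_op_funpow:
  assumes "hermitian B" "positive_op B"
  shows "positive_op (B ^^ k)"
proof -
  have herm: "cinner ((B ^^ j) u) v = cinner u ((B ^^ j) v)" for j u v
    using hermitian_funpow[OF assms(1)] by (simp add: hermitian_def)
  have "\<exists>j. k = j + j \<or> k = j + Suc j" by presburger
  then obtain j where "k = j + j \<or> k = j + Suc j" by blast
  then show ?thesis
  proof
    assume "k = j + j"
    then have "cinner ((B ^^ k) x) x = cinner ((B ^^ j) x) ((B ^^ j) x)" for x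
      by (simp only: funpow_add comp_apply herm)
    then show ?thesis by (simp add: positive_op_def cinner_self_norm)
  next
    assume "k = j + Suc j"
    then have "cinner ((B ^^ k) x) x = cinner (B ((B ^^ j) x)) ((B ^^ j) x)" for x
      by (simp only: funpow_add comp_apply herm funpow.simps(2))
    then show ?thesis using assms(2) by (simp add: positive_op_def)
  qed
qed

lemma positive_op_poly_op:
  assumes "hermitian B" "positive_op B" "nonneg_coeffs p"
  shows "positive_op (poly_op B p)"
proof -
  have "cinner (poly_op B p x) x
      = (\<Sum>k\<le>degree p. complex_of_real (coeff p k) * cinner ((B ^^ k) x) x)" for x
    by (simp add: poly_op_def cinner_sum_left cinner_scaleR_left)
  then show ?thesis
    using positive_op_funpow[OF assms(1,2)] assms(3)
    by (auto simp: positive_op_def Im_sum Re_sum nonneg_coeffs_def intro!: sum_nonneg sum.neutral)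
qed

lemma norm_poly_op_le:
  assumes "contraction B" "nonneg_coeffs p"
  shows "norm (poly_op B p x) \<le> poly p 1 * norm x"
proof -
  have "norm (poly_op B p x) \<le> (\<Sum>k\<le>degree p. norm (coeff p k *\<^sub>R (B ^^ k) x))"
    unfolding poly_op_def by (rule norm_sum)
  also have "\<dots> \<le> (\<Sum>k\<le>degree p. coeff p k * norm x)"
    using assms contraction_funpow[OF assms(1)]
    by (auto simp: nonneg_coeffs_def contraction_def intro!: sum_mono mult_left_mono)
  also have "\<dots> = poly p 1 * norm x"
    by (simp add: poly_altdef sum_distrib_right)
  finally show ?thesis .
qed

section \<open>Square roots of positive operators\<close>

text \<open>For a positive contraction \<open>B\<close>, the operator \<open>R = I - (I - B)\<^sup>1\<^sup>/\<^sup>2\<close> is the limit of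
  the iteration \<open>S\<^sub>0 = 0\<close>, \<open>S\<^sub>n\<^sub>+\<^sub>1 = (B + S\<^sub>n\<^sup>2)/2\<close>. Every \<open>S\<^sub>n\<close> is a polynomial in \<open>B\<close> with
  nonnegative coefficients, and so is every difference \<open>S\<^sub>n - S\<^sub>m\<close> with \<open>m \<le> n\<close>; this makes the
  iterates increasing positive contractions, and the Cauchy--Schwarz inequality for the positive
  form \<open>\<langle>(S\<^sub>n - S\<^sub>m) \<cdot>, \<cdot>\<rangle>\<close> turns monotone convergence of \<open>\<langle>S\<^sub>n x, x\<rangle>\<close> into convergence
  of \<open>S\<^sub>n x\<close>.\<close>

fun sqrt_approx_poly :: "nat \<Rightarrow> real poly" where
  "sqrt_approx_poly 0 = 0"
| "sqrt_approx_poly (Suc n) = smult (1/2) ([:0, 1:] + sqrt_approx_poly n * sqrt_approx_poly n)"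

lemma nonneg_coeffs_sqrt_approx_poly: "nonneg_coeffs (sqrt_approx_poly n)"
  by (induction n)
    (auto intro!: nonneg_coeffs_smult nonneg_coeffs_add nonneg_coeffs_mult nonneg_coeffs_X
      simp: nonneg_coeffs_0)

lemma nonneg_coeffs_sqrt_approx_poly_diff_Suc:
  "nonneg_coeffs (sqrt_approx_poly (Suc n) - sqrt_approx_poly n)"
proof (induction n)
  case 0
  then show ?case by (simp add: nonneg_coeffs_def coeff_pCons split: nat.split)
next
  case (Suc n)
  let ?p = sqrt_approx_poly
  have "?p (Suc (Suc n)) - ?p (Suc n)
      = smult (1/2) (([:0, 1:] + ?p (Suc n) * ?p (Suc n)) - ([:0, 1:] + ?p n * ?p n))"
    by (simp only: sqrt_approx_poly.simps smult_diff_right)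
  also have "\<dots> = smult (1/2) ((?p (Suc n) + ?p n) * (?p (Suc n) - ?p n))"
    by (simp add: algebra_simps)
  finally show ?case
    using Suc.IH by (simp only:)
      (intro nonneg_coeffs_smult nonneg_coeffs_mult nonneg_coeffs_add
        nonneg_coeffs_sqrt_approx_poly; simp)
qed

lemma nonneg_coeffs_sqrt_approx_poly_diff:
  "m \<le> n \<Longrightarrow> nonneg_coeffs (sqrt_approx_poly n - sqrt_approx_poly m)"
proof (induction n rule: dec_induct)
  case base
  then show ?case by (simp add: nonneg_coeffs_0)
next
  case (step n)
  have "sqrt_approx_poly (Suc n) - sqrt_approx_poly m
      = (sqrt_approx_poly (Suc n) - sqrt_approx_poly n) + (sqrt_approx_poly n - sqrt_approx_poly m)"
    by (simp only: diff_add_cancel)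
  then show ?case
    by (simp only: nonneg_coeffs_add[OF nonneg_coeffs_sqrt_approx_poly_diff_Suc step.IH])
qed

lemma poly_sqrt_approx_poly_one: "0 \<le> poly (sqrt_approx_poly n) 1 \<and> poly (sqrt_approx_poly n) 1 \<le> 1"
proof (induction n)
  case (Suc n)
  then have "(poly (sqrt_approx_poly n) 1)\<^sup>2 \<le> 1" by (simp add: power_le_one)
  then show ?case by (simp add: power2_eq_square)
qed simp

locale sqrt_iteration =
  fixes B :: "'a::chilbert_space \<Rightarrow> 'a"
  assumes clinear_B: "clinear B" and hermitian_B: "hermitian B"
    and positive_B: "positive_op B" and contraction_B: "contraction B"
begin

definition S :: "nat \<Rightarrow> 'a \<Rightarrow> 'a" where
  "S n = poly_op B (sqrt_approx_poly n)"

lemma clinear_S: "clinear (S n)"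
  unfolding S_def by (rule clinear_poly_op[OF clinear_B])

lemma hermitian_S: "hermitian (S n)"
  unfolding S_def by (rule hermitian_poly_op[OF clinear_B hermitian_B])

lemma positive_S: "positive_op (S n)"
  unfolding S_def
  by (rule positive_op_poly_op[OF hermitian_B positive_B nonneg_coeffs_sqrt_approx_poly])

lemma norm_S_le: "norm (S n x) \<le> norm x"
proof -
  have "norm (S n x) \<le> poly (sqrt_approx_poly n) 1 * norm x"
    unfolding S_def by (rule norm_poly_op_le[OF contraction_B nonneg_coeffs_sqrt_approx_poly])
  also have "\<dots> \<le> norm x"
    using poly_sqrt_approx_poly_one[of n] by (simp add: mult_left_le_one_le)
  finally show ?thesis .
qed

lemma S_Suc: "S (Suc n) x = (1/2) *\<^sub>R (B x + S n (S n x))"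
  unfolding S_def
  by (simp add: poly_op_smult poly_op_add poly_op_X[OF clinear_B] poly_op_mult[OF clinear_B])

context
  fixes m n :: nat
  assumes le: "m \<le> n"
begin

definition Sdiff :: "'a \<Rightarrow> 'a" where
  "Sdiff = poly_op B (sqrt_approx_poly n - sqrt_approx_poly m)"

lemma Sdiff_eq: "Sdiff x = S n x - S m x"
  by (simp add: Sdiff_def S_def poly_op_diff)

lemma psd_hermitian_form_Sdiff: "psd_hermitian_form (\<lambda>u v. cinner (Sdiff u) v)"
  unfolding Sdiff_def
  using clinear_poly_op[OF clinear_B] hermitian_poly_op[OF clinear_B hermitian_B]
    positive_op_poly_op[OF hermitian_B positive_B nonneg_coeffs_sqrt_approx_poly_diff[OF le]]
  by (rule psd_hermitian_form_op)

lemma norm_Sdiff_le: "norm (Sdiff x) \<le> norm x"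
proof -
  have "norm (Sdiff x) \<le> poly (sqrt_approx_poly n - sqrt_approx_poly m) 1 * norm x"
    unfolding Sdiff_def
    by (rule norm_poly_op_le[OF contraction_B nonneg_coeffs_sqrt_approx_poly_diff[OF le]])
  also have "\<dots> \<le> norm x"
  proof -
    have "poly (sqrt_approx_poly n - sqrt_approx_poly m) 1 \<le> 1"
      using poly_sqrt_approx_poly_one[of n] poly_sqrt_approx_poly_one[of m] by simp
    then show ?thesis using mult_right_mono[OF _ norm_ge_zero[of x]] by fastforce
  qed
  finally show ?thesis .
qed

lemma Re_cinner_S_mono: "Re (cinner (S m x) x) \<le> Re (cinner (S n x) x)"
  using psd_hermitian_form.nonneg[OF psd_hermitian_form_Sdiff, of x]
  by (simp add: Sdiff_eq cinner_add_left cinner.diff_left)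

lemma norm_S_diff_pow4_le:
  "(norm (S n x - S m x))^4 \<le> (Re (cinner (S n x) x) - Re (cinner (S m x) x)) * (norm x)\<^sup>2"
proof -
  interpret Sdiff: psd_hermitian_form "\<lambda>u v. cinner (Sdiff u) v" by (rule psd_hermitian_form_Sdiff)
  have "(norm (Sdiff x))^4 = (cmod (cinner (Sdiff x) (Sdiff x)))\<^sup>2"
    by (simp add: cinner_self_norm norm_power)
  also have "\<dots> \<le> Re (cinner (Sdiff x) x) * Re (cinner (Sdiff (Sdiff x)) (Sdiff x))"
    by (rule Sdiff.Cauchy_Schwarz)
  also have "\<dots> \<le> Re (cinner (Sdiff x) x) * (norm x)\<^sup>2"
  proof (rule mult_left_mono)
    have "Re (cinner (Sdiff (Sdiff x)) (Sdiff x)) \<le> norm (Sdiff (Sdiff x)) * norm (Sdiff x)"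
      by (rule Re_cinner_le)
    also have "\<dots> \<le> norm x * norm x"
      using norm_Sdiff_le[of "Sdiff x"] norm_Sdiff_le[of x]
      by (meson mult_mono' norm_ge_zero order_trans)
    finally show "Re (cinner (Sdiff (Sdiff x)) (Sdiff x)) \<le> (norm x)\<^sup>2"
      by (simp add: power2_eq_square)
    show "0 \<le> Re (cinner (Sdiff x) x)" using Sdiff.nonneg by simp
  qed
  finally show ?thesis by (simp add: Sdiff_eq cinner.diff_left)
qed

end

lemma convergent_Re_cinner_S: "convergent (\<lambda>n. Re (cinner (S n x) x))"
proof -
  have "Re (cinner (S n x) x) \<le> (norm x)\<^sup>2" for n
    using Re_cinner_le[of "S n x" x] mult_right_mono[OF norm_S_le[of n x] norm_ge_zero[of x]]
    by (simp add: power2_eq_square)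
  moreover have "incseq (\<lambda>n. Re (cinner (S n x) x))"
    by (rule incseq_SucI) (rule Re_cinner_S_mono, simp)
  ultimately show ?thesis
    using incseq_convergent convergent_def by blast
qed

lemma Cauchy_S: "Cauchy (\<lambda>n. S n x)"
proof (rule metric_CauchyI)
  fix e :: real
  assume e: "0 < e"
  define d where "d = e^4 / ((norm x)\<^sup>2 + 1)"
  have "0 < d" using e by (simp add: d_def add_nonneg_pos)
  then obtain M where M: "\<And>m n. m \<ge> M \<Longrightarrow> n \<ge> M
      \<Longrightarrow> dist (Re (cinner (S m x) x)) (Re (cinner (S n x) x)) < d"
    using convergent_Cauchy[OF convergent_Re_cinner_S] unfolding Cauchy_def by blast
  have "norm (S n x - S m x) < e" if "m \<le> n" "M \<le> m" for m n
  proof -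
    have "(norm (S n x - S m x))^4 \<le> (Re (cinner (S n x) x) - Re (cinner (S m x) x)) * (norm x)\<^sup>2"
      by (rule norm_S_diff_pow4_le[OF that(1)])
    also have "\<dots> \<le> d * (norm x)\<^sup>2"
      using M[of m n] that by (intro mult_right_mono) (auto simp: dist_real_def)
    also have "\<dots> = e^4 * ((norm x)\<^sup>2 / ((norm x)\<^sup>2 + 1))"
      by (simp add: d_def)
    also have "\<dots> < e^4"
    proof -
      have "0 < (norm x)\<^sup>2 + 1" by (simp add: add_nonneg_pos)
      then have "(norm x)\<^sup>2 / ((norm x)\<^sup>2 + 1) < 1" by (simp add: divide_less_eq)
      then have "e^4 * ((norm x)\<^sup>2 / ((norm x)\<^sup>2 + 1)) < e^4 * 1"
        using e by (intro mult_strict_left_mono) auto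
      then show ?thesis by simp
    qed
    finally show ?thesis
      using e by (meson norm_ge_zero power_less_imp_less_base less_imp_le)
  qed
  then show "\<exists>M. \<forall>m\<ge>M. \<forall>n\<ge>M. dist (S m x) (S n x) < e"
    by (metis dist_norm norm_minus_commute nle_le order_trans)
qed

definition R :: "'a \<Rightarrow> 'a" where
  "R x = lim (\<lambda>n. S n x)"

lemma LIMSEQ_S: "(\<lambda>n. S n x) \<longlonglongrightarrow> R x"
  unfolding R_def using Cauchy_S Cauchy_convergent_iff convergent_LIMSEQ_iff by blast

lemma clinear_R: "clinear R"
proof -
  have "(\<lambda>n. S n (x + y)) \<longlonglongrightarrow> R x + R y" for x y
    using tendsto_add[OF LIMSEQ_S[of x] LIMSEQ_S[of y]] by (simp add: clinear_add[OF clinear_S])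
  moreover have "(\<lambda>n. S n (c *\<^sub>C x)) \<longlonglongrightarrow> c *\<^sub>C R x" for c x
    using tendsto_scaleC[OF LIMSEQ_S[of x], of c] by (simp add: clinear_scaleC[OF clinear_S])
  ultimately show ?thesis
    unfolding clinear_def using LIMSEQ_S LIMSEQ_unique by blast
qed

lemma norm_R_le: "norm (R x) \<le> norm x"
  using tendsto_norm[OF LIMSEQ_S[of x]] norm_S_le by (intro LIMSEQ_le_const2) auto

lemma hermitian_R: "hermitian R"
  unfolding hermitian_def
proof (intro allI)
  fix x y
  have "(\<lambda>n. cinner (S n x) y) \<longlonglongrightarrow> cinner (R x) y"
    by (rule tendsto_cinner[OF LIMSEQ_S tendsto_const])
  moreover have "(\<lambda>n. cinner (S n x) y) \<longlonglongrightarrow> cinner x (R y)"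
    using tendsto_cinner[OF tendsto_const LIMSEQ_S] hermitian_S by (simp add: hermitian_def)
  ultimately show "cinner (R x) y = cinner x (R y)" by (rule LIMSEQ_unique)
qed

lemma positive_R: "positive_op R"
  unfolding positive_op_def
proof
  fix x
  have lim: "(\<lambda>n. cinner (S n x) x) \<longlonglongrightarrow> cinner (R x) x"
    by (rule tendsto_cinner[OF LIMSEQ_S tendsto_const])
  have "(\<lambda>n. Im (cinner (S n x) x)) \<longlonglongrightarrow> Im (cinner (R x) x)"
    by (rule tendsto_Im[OF lim])
  then have "Im (cinner (R x) x) = 0"
    using positive_S by (simp add: positive_op_def LIMSEQ_const_iff)
  moreover have "(\<lambda>n. Re (cinner (S n x) x)) \<longlonglongrightarrow> Re (cinner (R x) x)"
    by (rule tendsto_Re[OF lim])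
  then have "0 \<le> Re (cinner (R x) x)"
    using positive_S by (intro LIMSEQ_le_const) (auto simp: positive_op_def)
  ultimately show "Im (cinner (R x) x) = 0 \<and> 0 \<le> Re (cinner (R x) x)" by simp
qed

lemma R_fixpoint: "R x = (1/2) *\<^sub>R (B x + R (R x))"
proof -
  have "(\<lambda>n. S n (S n x - R x)) \<longlonglongrightarrow> 0"
  proof (rule Lim_null_comparison)
    show "\<forall>\<^sub>F n in sequentially. norm (S n (S n x - R x)) \<le> norm (S n x - R x)"
      using norm_S_le by simp
    show "(\<lambda>n. norm (S n x - R x)) \<longlonglongrightarrow> 0"
      using LIMSEQ_S[of x] by (simp add: LIM_zero tendsto_norm_zero)
  qed
  from tendsto_add[OF this LIMSEQ_S[of "R x"]] have "(\<lambda>n. S n (S n x)) \<longlonglongrightarrow> R (R x)"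
    by (simp add: clinear_diff[OF clinear_S])
  then have "(\<lambda>n. S (Suc n) x) \<longlonglongrightarrow> (1/2) *\<^sub>R (B x + R (R x))"
    unfolding S_Suc by (intro tendsto_scaleR tendsto_add tendsto_const)
  then show ?thesis using LIMSEQ_Suc[OF LIMSEQ_S] LIMSEQ_unique by blast
qed

lemma R_commute:
  assumes "bounded_linear T" "\<And>x. T (B x) = B (T x)"
  shows "T (R x) = R (T x)"
proof -
  have "(\<lambda>n. T (S n x)) \<longlonglongrightarrow> T (R x)"
    by (rule bounded_linear.tendsto[OF assms(1) LIMSEQ_S])
  moreover have "T (S n x) = S n (T x)" for n
    unfolding S_def
    by (rule poly_op_commute[OF clinear_B bounded_linear.linear[OF assms(1)] assms(2)])
  ultimately have "(\<lambda>n. S n (T x)) \<longlonglongrightarrow> T (R x)" by simp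
  then show ?thesis by (rule LIMSEQ_unique[OF _ LIMSEQ_S])
qed

definition Q :: "'a \<Rightarrow> 'a" where
  "Q x = x - R x"

lemma clinear_Q: "clinear Q"
  by (simp add: clinear_def Q_def clinear_add[OF clinear_R] clinear_scaleC[OF clinear_R]
      scaleC_diff_right)

lemma hermitian_Q: "hermitian Q"
  using hermitian_R by (simp add: hermitian_def Q_def cinner.diff_left cinner.diff_right)

lemma positive_Q: "positive_op Q"
  unfolding positive_op_def
proof
  fix x
  have "Re (cinner (R x) x) \<le> (norm x)\<^sup>2"
    using Re_cinner_le[of "R x" x] mult_right_mono[OF norm_R_le[of x] norm_ge_zero[of x]]
    by (simp add: power2_eq_square)
  then show "Im (cinner (Q x) x) = 0 \<and> 0 \<le> Re (cinner (Q x) x)"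
    using positive_R by (simp add: Q_def cinner.diff_left cinner_self_norm positive_op_def)
qed

lemma Q_Q: "Q (Q x) = x - B x"
proof -
  have "R (R x) = 2 *\<^sub>R R x - B x"
    using arg_cong[OF R_fixpoint[of x], of "\<lambda>v. 2 *\<^sub>R v"] by (simp add: algebra_simps)
  then show ?thesis by (simp add: Q_def clinear_diff[OF clinear_R] algebra_simps scaleR_2)
qed

lemma norm_Q_le: "norm (Q x) \<le> norm x * 2"
  using norm_triangle_ineq4[of x "R x"] norm_R_le[of x] by (simp add: Q_def)

lemma Q_commute:
  assumes "bounded_linear T" "\<And>x. T (B x) = B (T x)"
  shows "T (Q x) = Q (T x)"
  using R_commute[OF assms] by (simp add: Q_def linear_diff[OF bounded_linear.linear[OF assms(1)]])

end

lemma Re_cinner_le_if_bounded: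
  assumes "\<And>x. norm (G x) \<le> norm x * K"
  shows "Re (cinner (G x) x) \<le> \<bar>K\<bar> * (norm x)\<^sup>2"
proof -
  have "Re (cinner (G x) x) \<le> norm (G x) * norm x" by (rule Re_cinner_le)
  also have "\<dots> \<le> (norm x * \<bar>K\<bar>) * norm x"
    using assms[of x]
    by (intro mult_right_mono) (meson abs_ge_self mult_left_mono norm_ge_zero order_trans, simp)
  finally show ?thesis by (simp add: power2_eq_square mult_ac)
qed

lemma norm_sq_le_Re_cinner_if_positive_op:
  assumes "clinear G" "hermitian G" "positive_op G" "\<And>x. norm (G x) \<le> norm x * K"
  shows "(norm (G x))\<^sup>2 \<le> \<bar>K\<bar> * Re (cinner (G x) x)"
proof -
  interpret G: psd_hermitian_form "\<lambda>u v. cinner (G u) v"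
    by (rule psd_hermitian_form_op[OF assms(1-3)])
  have Re_nonneg: "0 \<le> Re (cinner (G x) x)" using G.nonneg by simp
  have GG: "Re (cinner (G (G x)) (G x)) \<le> \<bar>K\<bar> * (norm (G x))\<^sup>2"
    by (rule Re_cinner_le_if_bounded[OF assms(4)])
  have "((norm (G x))\<^sup>2)\<^sup>2 \<le> Re (cinner (G x) x) * Re (cinner (G (G x)) (G x))"
    using G.Cauchy_Schwarz[of x "G x"] by (simp add: cinner_self_norm norm_power)
  also have "\<dots> \<le> Re (cinner (G x) x) * (\<bar>K\<bar> * (norm (G x))\<^sup>2)"
    using GG Re_nonneg by (rule mult_left_mono)
  finally have ineq:
    "(norm (G x))\<^sup>2 * (norm (G x))\<^sup>2 \<le> (\<bar>K\<bar> * Re (cinner (G x) x)) * (norm (G x))\<^sup>2"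
    by (simp add: power2_eq_square mult_ac)
  show ?thesis
  proof (cases "norm (G x) = 0")
    case True
    then show ?thesis using Re_nonneg by simp
  next
    case False
    then show ?thesis using mult_right_le_imp_le[OF ineq] by simp
  qed
qed

lemma positive_op_id_minus_scaled:
  assumes "positive_op G" "\<And>x. norm (G x) \<le> norm x * K" "0 < c" "c * \<bar>K\<bar> \<le> 1"
  shows "positive_op (\<lambda>x. x - c *\<^sub>R G x)"
proof -
  have "c * Re (cinner (G x) x) \<le> (c * \<bar>K\<bar>) * (norm x)\<^sup>2" for x
    using Re_cinner_le_if_bounded[OF assms(2), of x] assms(3) by (simp add: mult.assoc)
  also have "\<dots> x \<le> (norm x)\<^sup>2" for x using assms(3,4) by (intro mult_left_le_one_le) auto
  finally show ?thesis
    using assms(1)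
    by (simp add: positive_op_def cinner.diff_left cinner_self_norm cinner_scaleR_left)
qed

lemma contraction_id_minus_scaled:
  assumes "clinear G" "hermitian G" "positive_op G" "\<And>x. norm (G x) \<le> norm x * K"
    and "0 < c" "c * \<bar>K\<bar> \<le> 1"
  shows "contraction (\<lambda>x. x - c *\<^sub>R G x)"
  unfolding contraction_def
proof
  fix x
  define r where "r = Re (cinner (G x) x)"
  have Gx: "cinner (G x) x = complex_of_real r" "cinner x (G x) = complex_of_real r"
    using assms(2,3) by (auto simp: r_def positive_op_def hermitian_def complex_eq_iff)
  have "cinner (x - c *\<^sub>R G x) (x - c *\<^sub>R G x) = cinner x x - cnj (complex_of_real c) * cinner x (G x)
      - complex_of_real c * cinner (G x) x
      + complex_of_real c * cnj (complex_of_real c) * cinner (G x) (G x)"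
    unfolding scaleR_scaleC by (rule cinner.self_diff_scaleC)
  also have "\<dots> = complex_of_real ((norm x)\<^sup>2 - 2 * c * r + c * c * (norm (G x))\<^sup>2)"
    unfolding Gx cinner_self_norm by simp
  finally have norm_sq: "(norm (x - c *\<^sub>R G x))\<^sup>2 = (norm x)\<^sup>2 - 2 * c * r + c * c * (norm (G x))\<^sup>2"
    by (metis Re_cinner_self Re_complex_of_real)
  have "c * c * (norm (G x))\<^sup>2 \<le> c * ((c * \<bar>K\<bar>) * r)"
    using norm_sq_le_Re_cinner_if_positive_op[OF assms(1-4), of x] assms(5)
    by (simp add: r_def mult_ac)
  also have "\<dots> \<le> c * r"
    using assms(3,5,6)
    by (intro mult_left_mono mult_left_le_one_le) (auto simp: r_def positive_op_def)
  moreover have "0 \<le> c * r"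
    using assms(3,5) by (simp add: r_def positive_op_def)
  ultimately have "(norm (x - c *\<^sub>R G x))\<^sup>2 \<le> (norm x)\<^sup>2"
    unfolding norm_sq by linarith
  then show "norm (x - c *\<^sub>R G x) \<le> norm x"
    by (simp add: power2_le_iff_abs_le)
qed

lemma sqrt_iteration_id_minus_scaled:
  assumes "clinear G" "hermitian G" "positive_op G" "\<And>x. norm (G x) \<le> norm x * K"
    and "0 < c" "c * \<bar>K\<bar> \<le> 1"
  shows "sqrt_iteration (\<lambda>x. x - c *\<^sub>R G x)"
proof
  show "clinear (\<lambda>x. x - c *\<^sub>R G x)"
    unfolding clinear_def
    by (simp add: clinear_add[OF assms(1)] clinear_scaleC[OF assms(1)] scaleC_diff_right
        scaleC_scaleR_commute scaleR_add_right algebra_simps)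
  show "hermitian (\<lambda>x. x - c *\<^sub>R G x)"
    using assms(2) by (simp add: hermitian_def cinner.diff_left cinner.diff_right
        cinner_scaleR_left cinner_scaleR_right)
  show "positive_op (\<lambda>x. x - c *\<^sub>R G x)"
    by (rule positive_op_id_minus_scaled[OF assms(3-6)])
  show "contraction (\<lambda>x. x - c *\<^sub>R G x)"
    by (rule contraction_id_minus_scaled[OF assms])
qed

text \<open>The square root is \<open>c\<^sup>-\<^sup>1\<^sup>/\<^sup>2 Q\<close> for the iteration on \<open>B = I - c G\<close>, where
  \<open>c = 1 / (|K| + 1)\<close> makes \<open>B\<close> a positive contraction.\<close>
lemma positive_sqrt_exists:
  fixes G :: "'a::chilbert_space \<Rightarrow> 'a"
  assumes "clinear G" "hermitian G" "positive_op G" "\<And>x. norm (G x) \<le> norm x * K"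
  obtains Sq K' where "clinear Sq" "hermitian Sq" "positive_op Sq" "\<And>x. norm (Sq x) \<le> norm x * K'"
    "\<And>x. Sq (Sq x) = G x"
    "\<And>T x. bounded_linear T \<Longrightarrow> (\<And>x. T (G x) = G (T x)) \<Longrightarrow> T (Sq x) = Sq (T x)"
proof -
  define c where "c = 1 / (\<bar>K\<bar> + 1)"
  have c: "0 < c" "c * \<bar>K\<bar> \<le> 1" by (auto simp: c_def field_simps add_nonneg_pos)
  interpret sqrt_iteration "\<lambda>x. x - c *\<^sub>R G x"
    by (rule sqrt_iteration_id_minus_scaled[OF assms c])
  define Sq where "Sq x = (1 / sqrt c) *\<^sub>R Q x" for x
  show thesis
  proof (rule that)
    show "clinear Sq"
      by (simp add: clinear_def Sq_def clinear_add[OF clinear_Q] clinear_scaleC[OF clinear_Q]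
          scaleR_add_right scaleC_scaleR_commute)
    show "hermitian Sq"
      using hermitian_Q by (simp add: hermitian_def Sq_def cinner_scaleR_left cinner_scaleR_right)
    show "positive_op Sq"
      using positive_Q c by (simp add: positive_op_def Sq_def cinner_scaleR_left)
    show "norm (Sq x) \<le> norm x * (2 / sqrt c)" for x
      using norm_Q_le[of x] c by (simp add: Sq_def divide_right_mono)
    show "Sq (Sq x) = G x" for x
      using Q_Q[of x] c
      by (simp add: Sq_def clinear_scaleR[OF clinear_Q] real_sqrt_mult [symmetric])
    show "T (Sq x) = Sq (T x)" if "bounded_linear T" "\<And>x. T (G x) = G (T x)" for T x
    proof -
      have lin: "linear T" using that(1) by (rule bounded_linear.linear)
      have "T (x - c *\<^sub>R G x) = T x - c *\<^sub>R G (T x)" for x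
        using that(2) by (simp add: linear_diff[OF lin] linear_scale[OF lin])
      then show ?thesis
        using Q_commute[OF that(1)] by (simp add: Sq_def linear_scale[OF lin])
    qed
  qed
qed

text \<open>Two commuting positive square roots \<open>S\<^sub>1, S\<^sub>2\<close> of the same operator agree: for
  \<open>y = S\<^sub>1 x - S\<^sub>2 x\<close> one has \<open>S\<^sub>1 y + S\<^sub>2 y = S\<^sub>1\<^sup>2 x - S\<^sub>2\<^sup>2 x = 0\<close>, so both terms vanish by positivity.\<close>
lemma positive_sqrt_unique:
  assumes S1: "clinear S1" "hermitian S1" "positive_op S1"
    and S2: "clinear S2" "hermitian S2" "positive_op S2"
    and sq: "\<And>x. S1 (S1 x) = S2 (S2 x)" and commute: "\<And>x. S1 (S2 x) = S2 (S1 x)"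
  shows "S1 = S2"
proof
  fix x
  define y where "y = S1 x - S2 x"
  have "S1 y + S2 y = 0"
    using sq[of x] commute[of x] by (simp add: y_def clinear_diff[OF S1(1)] clinear_diff[OF S2(1)])
  then have "Re (cinner (S1 y) y) + Re (cinner (S2 y) y) = 0"
    by (metis cinner.zero_left cinner_add_left plus_complex.sel(1) zero_complex.sel(1))
  moreover have "0 \<le> Re (cinner (S1 y) y)" "0 \<le> Re (cinner (S2 y) y)"
    using S1(3) S2(3) by (auto simp: positive_op_def)
  ultimately have "S1 y = 0" "S2 y = 0"
    using positive_op_eq_zero_if_Re_cinner_zero[OF S1] positive_op_eq_zero_if_Re_cinner_zero[OF S2]
    by auto
  moreover have "cinner y y = cinner x (S1 y) - cinner x (S2 y)"
    using S1(2) S2(2) by (simp add: y_def hermitian_def cinner.diff_left)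
  ultimately have "y = 0" using cinner_eq_zero_iff by auto
  then show "S1 x = S2 x" by (simp add: y_def)
qed

section \<open>Nearest points and orthogonal complements\<close>

lemma parallelogram_law:
  fixes u v :: "'a::complex_inner"
  shows "(norm (u + v))\<^sup>2 + (norm (u - v))\<^sup>2 = 2 * (norm u)\<^sup>2 + 2 * (norm v)\<^sup>2"
proof -
  have "cinner (u + v) (u + v) + cinner (u - v) (u - v) = 2 * cinner u u + 2 * cinner v v"
    by (simp add: cinner_add_left cinner.add_right cinner.diff_left cinner.diff_right)
  then have "complex_of_real ((norm (u + v))\<^sup>2 + (norm (u - v))\<^sup>2)
      = complex_of_real (2 * (norm u)\<^sup>2 + 2 * (norm v)\<^sup>2)"
    unfolding cinner_self_norm by simp
  then show ?thesis by (simp only: of_real_eq_iff)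
qed

lemma Cauchy_minimizing_sequence:
  fixes x :: "'a::complex_inner"
  assumes mid: "\<And>a b. a \<in> M \<Longrightarrow> b \<in> M \<Longrightarrow> (1/2) *\<^sub>R (a + b) \<in> M"
    and X: "\<And>n. X n \<in> M" and lower: "\<And>m. m \<in> M \<Longrightarrow> d \<le> norm (x - m)"
    and lim: "(\<lambda>n. norm (x - X n)) \<longlonglongrightarrow> d"
  shows "Cauchy X"
proof (rule metric_CauchyI)
  fix e :: real
  assume e: "0 < e"
  have d: "0 \<le> d" using lim by (rule LIMSEQ_le_const) simp
  have "(\<lambda>n. (norm (x - X n))\<^sup>2) \<longlonglongrightarrow> d\<^sup>2" by (intro tendsto_intros lim)
  moreover have "d\<^sup>2 < d\<^sup>2 + e\<^sup>2 / 4" using e by simp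
  ultimately have "\<forall>\<^sub>F n in sequentially. (norm (x - X n))\<^sup>2 < d\<^sup>2 + e\<^sup>2 / 4"
    by (rule order_tendstoD(2))
  then obtain N where N: "\<And>n. N \<le> n \<Longrightarrow> (norm (x - X n))\<^sup>2 < d\<^sup>2 + e\<^sup>2 / 4"
    by (auto simp: eventually_sequentially)
  have "dist (X m) (X n) < e" if "N \<le> m" "N \<le> n" for m n
  proof -
    have "(x - X m) + (x - X n) = 2 *\<^sub>R (x - (1/2) *\<^sub>R (X m + X n))"
      by (simp add: algebra_simps scaleR_2)
    then have "(norm ((x - X m) + (x - X n)))\<^sup>2 = 4 * (norm (x - (1/2) *\<^sub>R (X m + X n)))\<^sup>2"
      by (simp add: power_mult_distrib)
    moreover have "d\<^sup>2 \<le> (norm (x - (1/2) *\<^sub>R (X m + X n)))\<^sup>2"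
      using lower[OF mid[OF X X]] d by (intro power_mono) auto
    moreover have "(norm ((x - X m) - (x - X n)))\<^sup>2 = (norm (X n - X m))\<^sup>2" by simp
    ultimately have "(norm (X n - X m))\<^sup>2 < e\<^sup>2"
      using parallelogram_law[of "x - X m" "x - X n"] N[OF that(1)] N[OF that(2)] by linarith
    then show ?thesis
      using e by (simp add: dist_norm norm_minus_commute power_less_imp_less_base)
  qed
  then show "\<exists>N. \<forall>m\<ge>N. \<forall>n\<ge>N. dist (X m) (X n) < e" by blast
qed

lemma nearest_point_exists:
  fixes M :: "'a::chilbert_space set"
  assumes "closed M" "M \<noteq> {}" and mid: "\<And>a b. a \<in> M \<Longrightarrow> b \<in> M \<Longrightarrow> (1/2) *\<^sub>R (a + b) \<in> M"
  shows "\<exists>p\<in>M. \<forall>m\<in>M. norm (x - p) \<le> norm (x - m)"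
proof -
  define d where "d = Inf ((\<lambda>m. norm (x - m)) ` M)"
  have lower: "d \<le> norm (x - m)" if "m \<in> M" for m
    unfolding d_def using that by (intro cInf_lower) (auto intro: bdd_belowI[of _ 0])
  have "\<forall>n. \<exists>m. m \<in> M \<and> norm (x - m) < d + 1 / real (Suc n)"
  proof
    fix n
    have "Inf ((\<lambda>m. norm (x - m)) ` M) < d + 1 / real (Suc n)" by (simp add: d_def)
    then show "\<exists>m. m \<in> M \<and> norm (x - m) < d + 1 / real (Suc n)"
      using cInf_lessD[of "(\<lambda>m. norm (x - m)) ` M"] assms(2) by blast
  qed
  then obtain X where X: "\<And>n. X n \<in> M" "\<And>n. norm (x - X n) < d + 1 / real (Suc n)"
    by (metis choice)
  have upper: "(\<lambda>n. d + 1 / real (Suc n)) \<longlonglongrightarrow> d"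
    using tendsto_add[OF tendsto_const LIMSEQ_Suc[OF lim_inverse_n'], of d] by simp
  have lim: "(\<lambda>n. norm (x - X n)) \<longlonglongrightarrow> d"
    using lower[OF X(1)] less_imp_le[OF X(2)]
    by (intro tendsto_sandwich[OF always_eventually always_eventually tendsto_const upper]) auto
  obtain p where p: "X \<longlonglongrightarrow> p"
    using Cauchy_minimizing_sequence[OF mid X(1) lower lim] Cauchy_convergent_iff convergent_def
    by blast
  have "p \<in> M" using assms(1) p X(1) by (auto simp: closed_sequential_limits)
  moreover have "norm (x - p) = d"
    using LIMSEQ_unique[OF tendsto_norm[OF tendsto_diff[OF tendsto_const p]] lim] .
  ultimately show ?thesis using lower by auto
qed

definition csubspace :: "'a::complex_vector set \<Rightarrow> bool" where
  "csubspace M \<longleftrightarrow> 0 \<in> M \<and> (\<forall>x\<in>M. \<forall>y\<in>M. x + y \<in> M) \<and> (\<forall>c. \<forall>x\<in>M. c *\<^sub>C x \<in> M)"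

lemma csubspace_add: "csubspace M \<Longrightarrow> x \<in> M \<Longrightarrow> y \<in> M \<Longrightarrow> x + y \<in> M"
  unfolding csubspace_def by blast

lemma csubspace_scaleC: "csubspace M \<Longrightarrow> x \<in> M \<Longrightarrow> c *\<^sub>C x \<in> M"
  unfolding csubspace_def by blast

lemma csubspace_range:
  assumes "clinear f"
  shows "csubspace (range f)"
  unfolding csubspace_def
proof (intro conjI ballI allI)
  show "0 \<in> range f" using clinear_zero[OF assms] by (metis rangeI)
  fix x y assume "x \<in> range f" "y \<in> range f"
  then obtain a b where "x = f a" "y = f b" by blast
  then show "x + y \<in> range f" using clinear_add[OF assms, of a b] by (metis rangeI)
next
  fix c x assume "x \<in> range f"
  then obtain a where "x = f a" by blast
  then show "c *\<^sub>C x \<in> range f" using clinear_scaleC[OF assms, of c a] by (metis rangeI)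
qed

lemma nearest_point_orthogonal:
  fixes M :: "'a::complex_inner set"
  assumes "csubspace M" "p \<in> M" "\<And>m. m \<in> M \<Longrightarrow> norm (x - p) \<le> norm (x - m)" "m \<in> M"
  shows "cinner m (x - p) = 0"
proof (cases "m = 0")
  case False
  then have m: "0 < Re (cinner m m)" by (simp add: Re_cinner_self)
  define s where "s = cinner (x - p) m / complex_of_real (Re (cinner m m))"
  have "p + s *\<^sub>C m \<in> M" using assms(1,2,4) by (simp add: csubspace_add csubspace_scaleC)
  then have "(norm (x - p))\<^sup>2 \<le> (norm (x - p - s *\<^sub>C m))\<^sup>2"
    using assms(3) by (simp add: diff_diff_eq power_mono)
  also have "\<dots> = (norm (x - p))\<^sup>2 - (cmod (cinner (x - p) m))\<^sup>2 / Re (cinner m m)"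
    using cinner.Re_self_diff_projection[OF m, of "x - p"] by (simp add: s_def Re_cinner_self)
  finally have "cinner (x - p) m = 0" using m by (simp add: divide_le_0_iff)
  then show ?thesis by (metis cinner_commute complex_cnj_zero)
qed simp

lemma orthogonal_projection_exists:
  fixes M :: "'a::chilbert_space set"
  assumes "csubspace M" "closed M"
  shows "\<exists>p\<in>M. \<forall>m\<in>M. cinner m (x - p) = 0"
proof -
  have mid: "(1/2) *\<^sub>R (a + b) \<in> M" if "a \<in> M" "b \<in> M" for a b
    unfolding scaleR_scaleC by (intro csubspace_scaleC csubspace_add assms(1) that)
  have "M \<noteq> {}" using assms(1) by (auto simp: csubspace_def)
  then obtain p where "p \<in> M" "\<And>m. m \<in> M \<Longrightarrow> norm (x - p) \<le> norm (x - m)"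
    using nearest_point_exists[OF assms(2) _ mid] by blast
  then show ?thesis using nearest_point_orthogonal[OF assms(1)] by blast
qed

lemma closed_csubspace_eq_UNIV:
  fixes M :: "'a::chilbert_space set"
  assumes "csubspace M" "closed M" "\<And>w. (\<And>m. m \<in> M \<Longrightarrow> cinner m w = 0) \<Longrightarrow> w = 0"
  shows "M = UNIV"
proof -
  have "x \<in> M" for x
  proof -
    obtain p where "p \<in> M" "\<And>m. m \<in> M \<Longrightarrow> cinner m (x - p) = 0"
      using orthogonal_projection_exists[OF assms(1,2)] by blast
    then show ?thesis using assms(3)[of "x - p"] by simp
  qed
  then show ?thesis by blast
qed

lemma csubspace_closure:
  fixes M :: "'a::complex_inner set"
  assumes "csubspace M"
  shows "csubspace (closure M)"
proof -
  have "x + y \<in> closure M" if x: "x \<in> closure M" and y: "y \<in> closure M" for x y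
  proof -
    obtain X where "\<And>n. X n \<in> M" "X \<longlonglongrightarrow> x"
      using x unfolding closure_sequential by blast
    moreover obtain Y where "\<And>n. Y n \<in> M" "Y \<longlonglongrightarrow> y"
      using y unfolding closure_sequential by blast
    ultimately show ?thesis
      unfolding closure_sequential using assms
      by (intro exI[of _ "\<lambda>n. X n + Y n"]) (auto intro: tendsto_add csubspace_add)
  qed
  moreover have "c *\<^sub>C x \<in> closure M" if x: "x \<in> closure M" for c x
  proof -
    obtain X where "\<And>n. X n \<in> M" "X \<longlonglongrightarrow> x"
      using x unfolding closure_sequential by blast
    then show ?thesis
      unfolding closure_sequential using assms
      by (intro exI[of _ "\<lambda>n. c *\<^sub>C X n"]) (auto intro: tendsto_scaleC csubspace_scaleC)
  qed
  moreover have "0 \<in> closure M"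
    using assms closure_subset by (auto simp: csubspace_def)
  ultimately show ?thesis by (simp add: csubspace_def)
qed

lemma orthogonal_closure:
  assumes "\<And>m. m \<in> M \<Longrightarrow> cinner m w = 0" "m \<in> closure M"
  shows "cinner m w = 0"
proof -
  obtain X where X: "\<And>n. X n \<in> M" "X \<longlonglongrightarrow> m"
    using assms(2) unfolding closure_sequential by blast
  have "(\<lambda>n. cinner (X n) w) \<longlonglongrightarrow> cinner m w" by (rule tendsto_cinner[OF X(2) tendsto_const])
  then show ?thesis using X(1) assms(1) by (simp add: LIMSEQ_const_iff)
qed

lemma dense_csubspace_if_orthogonal_trivial:
  fixes M :: "'a::chilbert_space set"
  assumes "csubspace M" "\<And>w. (\<And>m. m \<in> M \<Longrightarrow> cinner m w = 0) \<Longrightarrow> w = 0"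
  shows "closure M = UNIV"
  using closed_csubspace_eq_UNIV[OF csubspace_closure[OF assms(1)] closed_closure] assms(2)
    closure_subset by blast

lemma orthogonal_dense_eq_zero:
  assumes "closure D = UNIV" "\<And>\<xi>. \<xi> \<in> D \<Longrightarrow> cinner \<xi> w = 0"
  shows "w = 0"
  using orthogonal_closure[of D w w] assms cinner_eq_zero_iff by blast

section \<open>Unbounded operators and their adjoints\<close>

lemma lin_op_add: "lin_op D A \<Longrightarrow> x \<in> D \<Longrightarrow> y \<in> D \<Longrightarrow> x + y \<in> D \<and> A (x + y) = A x + A y"
  unfolding lin_op_def by blast

lemma lin_op_scaleC: "lin_op D A \<Longrightarrow> x \<in> D \<Longrightarrow> c *\<^sub>C x \<in> D \<and> A (c *\<^sub>C x) = c *\<^sub>C A x"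
  unfolding lin_op_def by blast

lemma lin_op_zero: "lin_op D A \<Longrightarrow> 0 \<in> D \<and> A 0 = 0"
  using lin_op_scaleC[of D A 0 0] unfolding lin_op_def by simp

lemma lin_op_diff: "lin_op D A \<Longrightarrow> x \<in> D \<Longrightarrow> y \<in> D \<Longrightarrow> x - y \<in> D \<and> A (x - y) = A x - A y"
  using lin_op_add[of D A x "- y"] lin_op_scaleC[of D A y "-1"]
  by (simp add: scaleC_minus_left scaleC_one)

lemma csubspace_if_lin_op: "lin_op D A \<Longrightarrow> csubspace D"
  unfolding lin_op_def csubspace_def by blast

lemma lin_op_UNIV_iff: "lin_op UNIV f \<longleftrightarrow> clinear f"
  unfolding lin_op_def clinear_def by auto

lemma lin_op_conj:
  assumes "lin_op D A" "clinear S" "inj S"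
  shows "lin_op (S ` D) (\<lambda>\<eta>. S (A (inv S \<eta>)))"
  unfolding lin_op_def
proof (intro conjI ballI allI)
  show "0 \<in> S ` D" using lin_op_zero[OF assms(1)] clinear_zero[OF assms(2)] by (metis image_eqI)
  fix x y assume "x \<in> S ` D" "y \<in> S ` D"
  then obtain x0 y0 where xy: "x = S x0" "x0 \<in> D" "y = S y0" "y0 \<in> D" by blast
  have sum: "x + y = S (x0 + y0)" using xy by (simp add: clinear_add[OF assms(2)])
  show "x + y \<in> S ` D" using sum lin_op_add[OF assms(1) xy(2,4)] by blast
  have "inv S (x + y) = x0 + y0" unfolding sum by (rule inv_f_f[OF assms(3)])
  moreover have "inv S x = x0" "inv S y = y0" using xy by (simp_all add: inv_f_f[OF assms(3)])
  ultimately
  show "S (A (inv S (x + y))) = S (A (inv S x)) + S (A (inv S y))"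
    using lin_op_add[OF assms(1) xy(2,4)] by (simp add: clinear_add[OF assms(2)])
next
  fix c x assume "x \<in> S ` D"
  then obtain x0 where x: "x = S x0" "x0 \<in> D" by blast
  have scaled: "c *\<^sub>C x = S (c *\<^sub>C x0)" using x by (simp add: clinear_scaleC[OF assms(2)])
  show "c *\<^sub>C x \<in> S ` D" using scaled lin_op_scaleC[OF assms(1) x(2)] by blast
  have "inv S (c *\<^sub>C x) = c *\<^sub>C x0" unfolding scaled by (rule inv_f_f[OF assms(3)])
  moreover have "inv S x = x0" using x by (simp add: inv_f_f[OF assms(3)])
  ultimately
  show "S (A (inv S (c *\<^sub>C x))) = c *\<^sub>C S (A (inv S x))"
    using lin_op_scaleC[OF assms(1) x(2)] by (simp add: clinear_scaleC[OF assms(2)])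
qed

lemma cinner_adj:
  assumes "\<eta> \<in> adj_dom D A" "\<xi> \<in> D"
  shows "cinner (A \<xi>) \<eta> = cinner \<xi> (adj D A \<eta>)"
proof -
  have "\<exists>\<zeta>. \<forall>\<xi>\<in>D. cinner (A \<xi>) \<eta> = cinner \<xi> \<zeta>" using assms(1) by (simp add: adj_dom_def)
  then have "\<forall>\<xi>\<in>D. cinner (A \<xi>) \<eta> = cinner \<xi> (adj D A \<eta>)" unfolding adj_def by (rule someI_ex)
  then show ?thesis using assms(2) by blast
qed

lemma adj_domI:
  assumes "closure D = UNIV" "\<And>\<xi>. \<xi> \<in> D \<Longrightarrow> cinner (A \<xi>) \<eta> = cinner \<xi> z"
  shows "\<eta> \<in> adj_dom D A \<and> adj D A \<eta> = z"
proof
  show dom: "\<eta> \<in> adj_dom D A" unfolding adj_dom_def using assms(2) by blast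
  have "cinner \<xi> (adj D A \<eta> - z) = 0" if "\<xi> \<in> D" for \<xi>
    using cinner_adj[OF dom that] assms(2)[OF that] by (simp add: cinner.diff_right)
  then have "adj D A \<eta> - z = 0" by (rule orthogonal_dense_eq_zero[OF assms(1)])
  then show "adj D A \<eta> = z" by simp
qed

lemma self_adjoint_opI:
  assumes "lin_op D T" "closure D = UNIV"
    and symmetric: "\<And>\<xi> \<eta>. \<xi> \<in> D \<Longrightarrow> \<eta> \<in> D \<Longrightarrow> cinner (T \<xi>) \<eta> = cinner \<xi> (T \<eta>)"
    and maximal: "\<And>\<eta> z. (\<And>\<xi>. \<xi> \<in> D \<Longrightarrow> cinner (T \<xi>) \<eta> = cinner \<xi> z) \<Longrightarrow> \<eta> \<in> D"
  shows "self_adjoint_op D T"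
  unfolding self_adjoint_op_def densely_defined_def
proof (intro conjI ballI)
  show "adj_dom D T = D"
  proof
    show "adj_dom D T \<subseteq> D" using cinner_adj maximal by blast
    show "D \<subseteq> adj_dom D T" using symmetric unfolding adj_dom_def by blast
  qed
  show "adj D T \<eta> = T \<eta>" if "\<eta> \<in> D" for \<eta>
    using adj_domI[OF assms(2), of T \<eta> "T \<eta>"] symmetric that by blast
qed fact+

lemma self_adjoint_op_lin_op: "self_adjoint_op D T \<Longrightarrow> lin_op D T"
  by (simp add: self_adjoint_op_def densely_defined_def)

lemma self_adjoint_op_dense: "self_adjoint_op D T \<Longrightarrow> closure D = UNIV"
  by (simp add: self_adjoint_op_def densely_defined_def)

lemma self_adjoint_op_symmetric:
  assumes "self_adjoint_op D T" "\<xi> \<in> D" "\<eta> \<in> D"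
  shows "cinner (T \<xi>) \<eta> = cinner \<xi> (T \<eta>)"
  using cinner_adj[of \<eta> D T \<xi>] assms unfolding self_adjoint_op_def by auto

lemma self_adjoint_op_maximal:
  assumes "self_adjoint_op D T" "\<And>\<xi>. \<xi> \<in> D \<Longrightarrow> cinner (T \<xi>) \<eta> = cinner \<xi> z"
  shows "\<eta> \<in> D \<and> T \<eta> = z"
  using adj_domI[OF self_adjoint_op_dense[OF assms(1)] assms(2)] assms(1)
  unfolding self_adjoint_op_def by auto

lemma self_adjoint_op_UNIV_iff:
  fixes S :: "'a::chilbert_space \<Rightarrow> 'a"
  assumes "clinear S"
  shows "self_adjoint_op UNIV S \<longleftrightarrow> hermitian S"
  using self_adjoint_op_symmetric[of UNIV S] self_adjoint_opI[of UNIV S] assms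
  by (auto simp: hermitian_def lin_op_UNIV_iff)

lemma self_adjoint_op_closed_graph:
  assumes "self_adjoint_op D T" "\<And>n. Y n \<in> D" "Y \<longlonglongrightarrow> y" "(\<lambda>n. T (Y n)) \<longlonglongrightarrow> z"
  shows "y \<in> D \<and> T y = z"
proof (rule self_adjoint_op_maximal[OF assms(1)])
  fix u assume "u \<in> D"
  have "(\<lambda>n. cinner (T u) (Y n)) \<longlonglongrightarrow> cinner (T u) y"
    by (rule tendsto_cinner[OF tendsto_const assms(3)])
  moreover have "(\<lambda>n. cinner (T u) (Y n)) \<longlonglongrightarrow> cinner u z"
    using tendsto_cinner[OF tendsto_const assms(4)]
    by (simp add: self_adjoint_op_symmetric[OF assms(1) \<open>u \<in> D\<close> assms(2)])
  ultimately show "cinner (T u) y = cinner u z" by (rule LIMSEQ_unique)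
qed

lemma norm_self_adjoint_op_minus_i:
  assumes "self_adjoint_op D T" "y \<in> D"
  shows "(norm (T y - (\<i> * complex_of_real s) *\<^sub>C y))\<^sup>2 = (norm (T y))\<^sup>2 + s\<^sup>2 * (norm y)\<^sup>2"
proof -
  define l where "l = \<i> * complex_of_real s"
  have sym: "cinner y (T y) = cinner (T y) y"
    using self_adjoint_op_symmetric[OF assms(1,2,2)] by simp
  have "cinner (T y - l *\<^sub>C y) (T y - l *\<^sub>C y)
      = cinner (T y) (T y) - cnj l * cinner (T y) y - l * cinner y (T y) + l * cnj l * cinner y y"
    by (rule cinner.self_diff_scaleC)
  also have "\<dots> = cinner (T y) (T y) + complex_of_real (s\<^sup>2) * cinner y y"
    unfolding sym l_def by (simp add: algebra_simps power2_eq_square)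
  finally have "cinner (T y - l *\<^sub>C y) (T y - l *\<^sub>C y)
      = complex_of_real ((norm (T y))\<^sup>2 + s\<^sup>2 * (norm y)\<^sup>2)"
    by (simp add: cinner_self_norm)
  then show ?thesis unfolding l_def by (metis Re_cinner_self Re_complex_of_real)
qed

lemma Cauchy_if_scaled_dist_le:
  assumes "Cauchy W" "0 < k" "\<And>m n. k * dist (Y m) (Y n) \<le> dist (W m) (W n)"
  shows "Cauchy Y"
proof (rule metric_CauchyI)
  fix e :: real
  assume "0 < e"
  then obtain N where N: "\<forall>m\<ge>N. \<forall>n\<ge>N. dist (W m) (W n) < k * e"
    using assms(1,2) unfolding Cauchy_def by (meson mult_pos_pos)
  have "dist (Y m) (Y n) < e" if "N \<le> m" "N \<le> n" for m n
    using order_le_less_trans[OF assms(3) N[rule_format, OF that]] assms(2) by simp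
  then show "\<exists>N. \<forall>m\<ge>N. \<forall>n\<ge>N. dist (Y m) (Y n) < e" by blast
qed

lemma norm_self_adjoint_op_minus_i_ge:
  assumes "self_adjoint_op D T" "y \<in> D"
  shows "\<bar>s\<bar> * norm y \<le> norm (T y - (\<i> * complex_of_real s) *\<^sub>C y)"
proof -
  have "(\<bar>s\<bar> * norm y)\<^sup>2 \<le> (norm (T y - (\<i> * complex_of_real s) *\<^sub>C y))\<^sup>2"
    unfolding norm_self_adjoint_op_minus_i[OF assms] by (simp add: power_mult_distrib)
  then show ?thesis by (simp add: power2_le_iff_abs_le)
qed

lemma csubspace_range_minus_scaleC:
  assumes lin: "lin_op D T"
  shows "csubspace {T y - l *\<^sub>C y | y. y \<in> D}"
  unfolding csubspace_def
proof (intro conjI ballI allI)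
  show "0 \<in> {T y - l *\<^sub>C y |y. y \<in> D}"
    using lin_op_zero[OF lin] by (intro CollectI exI[of _ 0]) simp
  fix a b assume "a \<in> {T y - l *\<^sub>C y |y. y \<in> D}" "b \<in> {T y - l *\<^sub>C y |y. y \<in> D}"
  then obtain ya yb where "a = T ya - l *\<^sub>C ya" "ya \<in> D" "b = T yb - l *\<^sub>C yb" "yb \<in> D" by blast
  then show "a + b \<in> {T y - l *\<^sub>C y |y. y \<in> D}"
    using lin_op_add[OF lin, of ya yb]
    by (intro CollectI exI[of _ "ya + yb"]) (simp add: scaleC_add_right algebra_simps)
next
  fix c a assume "a \<in> {T y - l *\<^sub>C y |y. y \<in> D}"
  then obtain ya where "a = T ya - l *\<^sub>C ya" "ya \<in> D" by blast
  then show "c *\<^sub>C a \<in> {T y - l *\<^sub>C y |y. y \<in> D}"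
    using lin_op_scaleC[OF lin, of ya c]
    by (intro CollectI exI[of _ "c *\<^sub>C ya"]) (simp add: scaleC_diff_right scaleC_scaleC mult.commute)
qed

text \<open>For self-adjoint \<open>T\<close> and real \<open>s \<noteq> 0\<close>, \<open>T - i s\<close> is bounded below by \<open>|s|\<close>, so its range is
  closed; a vector orthogonal to the range would be an eigenvector of \<open>T\<close> with the non-real
  eigenvalue \<open>-i s\<close>. Hence \<open>T - i s\<close> is onto.\<close>
lemma closed_range_self_adjoint_op_minus_i:
  assumes "self_adjoint_op D T" "s \<noteq> 0"
  shows "closed {T y - (\<i> * complex_of_real s) *\<^sub>C y | y. y \<in> D}"
  unfolding closed_sequential_limits
proof (intro allI impI)
  define l where "l = \<i> * complex_of_real s"
  have lin: "lin_op D T" by (rule self_adjoint_op_lin_op[OF assms(1)])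
  fix W w
  assume "(\<forall>n. W n \<in> {T y - (\<i> * complex_of_real s) *\<^sub>C y | y. y \<in> D}) \<and> W \<longlonglongrightarrow> w"
  then have W: "\<forall>n. \<exists>y. y \<in> D \<and> W n = T y - l *\<^sub>C y" "W \<longlonglongrightarrow> w" by (auto simp: l_def)
  obtain Y where Y: "\<And>n. Y n \<in> D" "\<And>n. W n = T (Y n) - l *\<^sub>C Y n"
    using choice[OF W(1)] by blast
  have bound: "\<bar>s\<bar> * norm (Y m - Y n) \<le> norm (W m - W n)" for m n
  proof -
    have d: "Y m - Y n \<in> D" "T (Y m - Y n) = T (Y m) - T (Y n)"
      using lin_op_diff[OF lin Y(1) Y(1)] by auto
    have "\<bar>s\<bar> * norm (Y m - Y n) \<le> norm (T (Y m - Y n) - l *\<^sub>C (Y m - Y n))"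
      unfolding l_def by (rule norm_self_adjoint_op_minus_i_ge[OF assms(1) d(1)])
    also have "T (Y m - Y n) - l *\<^sub>C (Y m - Y n) = W m - W n"
      unfolding d(2) Y(2) by (simp add: scaleC_diff_right algebra_simps)
    finally show ?thesis .
  qed
  have "Cauchy Y"
  proof (rule Cauchy_if_scaled_dist_le[OF LIMSEQ_imp_Cauchy[OF W(2)]])
    show "0 < \<bar>s\<bar>" using assms(2) by simp
    show "\<bar>s\<bar> * dist (Y m) (Y n) \<le> dist (W m) (W n)" for m n
      using bound by (simp add: dist_norm)
  qed
  then obtain y where y: "Y \<longlonglongrightarrow> y" using Cauchy_convergent_iff convergent_def by blast
  have "(\<lambda>n. W n + l *\<^sub>C Y n) \<longlonglongrightarrow> w + l *\<^sub>C y" by (intro tendsto_add tendsto_scaleC y W(2))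
  then have "(\<lambda>n. T (Y n)) \<longlonglongrightarrow> w + l *\<^sub>C y" by (simp add: Y(2))
  then have "y \<in> D \<and> T y = w + l *\<^sub>C y" by (rule self_adjoint_op_closed_graph[OF assms(1) Y(1) y])
  then show "w \<in> {T y - (\<i> * complex_of_real s) *\<^sub>C y | y. y \<in> D}"
    by (intro CollectI exI[of _ y]) (simp add: l_def)
qed

lemma self_adjoint_op_minus_i_surj:
  assumes "self_adjoint_op D T" "s \<noteq> 0"
  shows "\<exists>y\<in>D. T y - (\<i> * complex_of_real s) *\<^sub>C y = w"
proof -
  define l where "l = \<i> * complex_of_real s"
  define M where "M = {T y - l *\<^sub>C y | y. y \<in> D}"
  have "csubspace M"
    unfolding M_def by (rule csubspace_range_minus_scaleC[OF self_adjoint_op_lin_op[OF assms(1)]])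
  moreover have "closed M"
    using closed_range_self_adjoint_op_minus_i[OF assms] by (simp add: M_def l_def)
  moreover have "v = 0" if v: "\<And>m. m \<in> M \<Longrightarrow> cinner m v = 0" for v
  proof -
    have "cinner (T \<xi>) v = cinner \<xi> (cnj l *\<^sub>C v)" if "\<xi> \<in> D" for \<xi>
    proof -
      have "cinner (T \<xi> - l *\<^sub>C \<xi>) v = 0" using v that unfolding M_def by blast
      then show ?thesis by (simp add: cinner.diff_left cinner_scaleC_left cinner.scale_right)
    qed
    then have "v \<in> D \<and> T v = cnj l *\<^sub>C v" by (rule self_adjoint_op_maximal[OF assms(1)])
    then have "cnj l * cinner v v = l * cinner v v"
      using self_adjoint_op_symmetric[OF assms(1), of v v]
      by (simp add: cinner_scaleC_left cinner.scale_right)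
    moreover have "cnj l \<noteq> l" using assms(2) by (simp add: l_def complex_eq_iff)
    ultimately have "cinner v v = 0" by simp
    then show ?thesis using cinner_eq_zero_iff by blast
  qed
  ultimately have "M = UNIV" by (rule closed_csubspace_eq_UNIV)
  then have "w \<in> M" by simp
  then show ?thesis unfolding M_def l_def by blast
qed

lemma surj_if_self_adjoint_op_conj:
  assumes "self_adjoint_op (S ` D) (\<lambda>\<eta>. S (A (inv S \<eta>)))" "clinear S" "inj S"
  shows "surj S"
proof -
  have "w \<in> range S" for w
  proof -
    obtain y where y: "y \<in> S ` D" "S (A (inv S y)) - (\<i> * complex_of_real 1) *\<^sub>C y = w"
      using self_adjoint_op_minus_i_surj[OF assms(1), of 1 w] by auto
    then obtain x where "y = S x" by blast
    then have "w = S (A x) - \<i> *\<^sub>C S x" using y(2) by (simp add: inv_f_f[OF assms(3)])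
    then have "w = S (A x - \<i> *\<^sub>C x)"
      by (simp add: clinear_diff[OF assms(2)] clinear_scaleC[OF assms(2)])
    then show ?thesis by blast
  qed
  then show ?thesis by blast
qed

lemma closed_range_if_norm_eq:
  fixes f :: "'a::complex_vector \<Rightarrow> 'b::chilbert_space" and g :: "'a \<Rightarrow> 'c::chilbert_space"
  assumes "clinear f" "clinear g" "\<And>x. norm (f x) = norm (g x)" "closed (range f)"
  shows "closed (range g)"
  unfolding closed_sequential_limits
proof (intro allI impI)
  fix K k
  assume K: "(\<forall>n. K n \<in> range g) \<and> K \<longlonglongrightarrow> k"
  then have "\<forall>n. \<exists>x. K n = g x" by blast
  then obtain X where X: "\<And>n. K n = g (X n)" by (metis choice)
  have norm_eq: "norm (f u - f v) = norm (g u - g v)" for u v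
    using assms(3)[of "u - v"] by (simp add: clinear_diff[OF assms(1)] clinear_diff[OF assms(2)])
  have "Cauchy (\<lambda>n. f (X n))"
    using LIMSEQ_imp_Cauchy[of K k] K unfolding Cauchy_def dist_norm norm_eq X by blast
  then obtain z where z: "(\<lambda>n. f (X n)) \<longlonglongrightarrow> z"
    using Cauchy_convergent_iff convergent_def by blast
  then have "z \<in> range f"
    using assms(4)[unfolded closed_sequential_limits, rule_format, of "\<lambda>n. f (X n)" z] by blast
  then obtain x where x: "z = f x" by blast
  have "(\<lambda>n. norm (f (X n) - f x)) \<longlonglongrightarrow> 0"
    using z x by (simp add: LIM_zero tendsto_norm_zero)
  then have "(\<lambda>n. K n - g x) \<longlonglongrightarrow> 0"
    by (simp add: norm_eq X tendsto_norm_zero_iff)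
  then have "k = g x" using K LIMSEQ_unique by (auto simp: LIM_zero_iff)
  then show "k \<in> range g" by blast
qed

lemma dense_image_transfer:
  fixes S :: "'a::chilbert_space \<Rightarrow> 'b::chilbert_space" and J :: "'a \<Rightarrow> 'c::chilbert_space"
  assumes "closure (S ` D) = UNIV" "surj J"
    and inner: "\<And>x y. cinner (J x) (J y) = cinner (S x) (S y)" and "csubspace (J ` D)"
  shows "closure (J ` D) = UNIV"
proof (rule dense_csubspace_if_orthogonal_trivial[OF assms(4)])
  fix k assume k: "\<And>m. m \<in> J ` D \<Longrightarrow> cinner m k = 0"
  obtain w where w: "k = J w" using assms(2) by (metis surj_def)
  have "cinner m (S w) = 0" if "m \<in> S ` D" for m
    using that k w by (auto simp: inner [symmetric])
  then have "S w = 0" by (rule orthogonal_dense_eq_zero[OF assms(1)])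
  then have "cinner k k = 0" using w inner[of w w] by simp
  then show "k = 0" using cinner_eq_zero_iff by blast
qed

lemma self_adjoint_op_conj_transfer:
  fixes S :: "'a::chilbert_space \<Rightarrow> 'b::chilbert_space" and J :: "'a \<Rightarrow> 'c::chilbert_space"
  assumes sa: "self_adjoint_op (S ` D) (\<lambda>\<eta>. S (A (inv S \<eta>)))" and lin: "lin_op D A"
    and S: "clinear S" "inj S" and J: "clinear J" "inj J" "surj J"
    and inner: "\<And>x y. cinner (J x) (J y) = cinner (S x) (S y)"
  shows "self_adjoint_op (J ` D) (\<lambda>k. J (A (inv J k)))"
proof (rule self_adjoint_opI[OF lin_op_conj[OF lin J(1,2)]])
  have S_inv: "inv S (S x) = x" and J_inv: "inv J (J x) = x" for x
    by (simp_all add: inv_f_f S(2) J(2))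
  show "closure (J ` D) = UNIV"
    by (rule dense_image_transfer[OF self_adjoint_op_dense[OF sa] J(3) inner
          csubspace_if_lin_op[OF lin_op_conj[OF lin J(1,2)]]])
  show "cinner (J (A (inv J \<xi>))) \<eta> = cinner \<xi> (J (A (inv J \<eta>)))"
    if xi: "\<xi> \<in> J ` D" and eta: "\<eta> \<in> J ` D" for \<xi> \<eta>
  proof -
    obtain x y where xy: "\<xi> = J x" "x \<in> D" "\<eta> = J y" "y \<in> D" using xi eta by blast
    have "cinner (J (A x)) (J y) = cinner (S (A (inv S (S x)))) (S y)" by (simp add: inner S_inv)
    also have "\<dots> = cinner (S x) (S (A (inv S (S y))))"
      using xy by (intro self_adjoint_op_symmetric[OF sa]) auto
    also have "\<dots> = cinner (J x) (J (A y))" by (simp add: inner S_inv)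
    finally show ?thesis by (simp add: xy J_inv)
  qed
  show "\<eta> \<in> J ` D" if max: "\<And>\<xi>. \<xi> \<in> J ` D \<Longrightarrow> cinner (J (A (inv J \<xi>))) \<eta> = cinner \<xi> z" for \<eta> z
  proof -
    obtain w v where wv: "\<eta> = J w" "z = J v" using J(3) by (metis surj_def)
    have "cinner (S (A (inv S \<xi>))) (S w) = cinner \<xi> (S v)" if xi: "\<xi> \<in> S ` D" for \<xi>
    proof -
      obtain x where "\<xi> = S x" "x \<in> D" using xi by blast
      then show ?thesis using max[of "J x"] by (simp add: S_inv J_inv wv inner)
    qed
    then have "S w \<in> S ` D" using self_adjoint_op_maximal[OF sa] by blast
    then have "w \<in> D" using S(2) by (auto dest: injD)
    then show ?thesis using wv by blast
  qed
qed

section \<open>Metric operators\<close>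

lemma bounded_metric_opD:
  assumes "bounded_metric_op G"
  shows "clinear G" "\<exists>K. \<forall>x. norm (G x) \<le> norm x * K" "hermitian G" "positive_op G"
    and bounded_metric_op_zero: "cinner (G x) x = 0 \<Longrightarrow> x = 0"
proof -
  show G: "clinear G" "\<exists>K. \<forall>x. norm (G x) \<le> norm x * K"
    using assms by (simp_all add: bounded_metric_op_def bounded_clinear_op_def lin_op_UNIV_iff)
  show "hermitian G"
    using assms self_adjoint_op_UNIV_iff[OF G(1)] by (simp add: bounded_metric_op_def)
  have pos: "x \<noteq> 0 \<Longrightarrow> Im (cinner (G x) x) = 0 \<and> Re (cinner (G x) x) > 0" for x
    using assms by (simp add: bounded_metric_op_def)
  show "positive_op G"
    unfolding positive_op_def
  proof
    fix x
    show "Im (cinner (G x) x) = 0 \<and> 0 \<le> Re (cinner (G x) x)"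
      using pos[of x] clinear_zero[OF G(1)] by (cases "x = 0") auto
  qed
  show "cinner (G x) x = 0 \<Longrightarrow> x = 0"
    using pos[of x] by auto
qed

lemma positive_sqrt_ex1:
  fixes G :: "'a::chilbert_space \<Rightarrow> 'a"
  assumes "clinear G" "hermitian G" "positive_op G" "\<And>x. norm (G x) \<le> norm x * K"
  shows "\<exists>!S. clinear S \<and> (\<exists>K. \<forall>x. norm (S x) \<le> norm x * K) \<and> hermitian S \<and> positive_op S
    \<and> S \<circ> S = G"
proof (rule positive_sqrt_exists[OF assms])
  fix Sq L
  assume Sq: "clinear Sq" "hermitian Sq" "positive_op Sq" "\<And>x. norm (Sq x) \<le> norm x * L"
      "\<And>x. Sq (Sq x) = G x"
    and commute: "\<And>T x. bounded_linear T \<Longrightarrow> (\<And>x. T (G x) = G (T x)) \<Longrightarrow> T (Sq x) = Sq (T x)"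
  show ?thesis
  proof (rule ex1I[of _ Sq])
    have "Sq \<circ> Sq = G" using Sq(5) by (simp add: fun_eq_iff)
    then show "clinear Sq \<and> (\<exists>K. \<forall>x. norm (Sq x) \<le> norm x * K) \<and> hermitian Sq \<and> positive_op Sq
      \<and> Sq \<circ> Sq = G"
      using Sq(1-4) by blast
  next
    fix T
    assume "clinear T \<and> (\<exists>K. \<forall>x. norm (T x) \<le> norm x * K) \<and> hermitian T \<and> positive_op T
      \<and> T \<circ> T = G"
    then obtain L' where T: "clinear T" "\<And>x. norm (T x) \<le> norm x * L'" "hermitian T" "positive_op T"
      "T \<circ> T = G"
      by blast
    have TG: "T (G x) = G (T x)" for x unfolding T(5) [symmetric] by simp
    have "T (Sq x) = Sq (T x)" for x
      by (rule commute[OF bounded_linear_if_clinear[OF T(1,2)] TG])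
    moreover have "T (T x) = Sq (Sq x)" for x using T(5) Sq(5) by (metis comp_apply)
    ultimately show "T = Sq"
      by (intro positive_sqrt_unique[OF T(1,3,4) Sq(1-3)]) simp_all
  qed
qed

lemma op_sqrtD:
  fixes G :: "'a::chilbert_space \<Rightarrow> 'a"
  assumes "bounded_metric_op G"
  shows "clinear (op_sqrt G)" "hermitian (op_sqrt G)" "op_sqrt G (op_sqrt G x) = G x"
proof -
  define P where "P S \<longleftrightarrow> bounded_clinear_op S \<and> self_adjoint_op UNIV S
      \<and> (\<forall>x. Im (cinner (S x) x) = 0 \<and> Re (cinner (S x) x) \<ge> 0) \<and> S \<circ> S = G" for S :: "'a \<Rightarrow> 'a"
  have P_iff: "P S \<longleftrightarrow> clinear S \<and> (\<exists>K. \<forall>x. norm (S x) \<le> norm x * K) \<and> hermitian S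
      \<and> positive_op S \<and> S \<circ> S = G" for S
    unfolding P_def bounded_clinear_op_def lin_op_UNIV_iff positive_op_def
    using self_adjoint_op_UNIV_iff[of S] by blast
  obtain K where "\<And>x. norm (G x) \<le> norm x * K" using bounded_metric_opD(2)[OF assms] by blast
  then have "\<exists>!S. P S"
    unfolding P_iff by (rule positive_sqrt_ex1[OF bounded_metric_opD(1,3,4)[OF assms]])
  then have "P (THE S. P S)" by (rule theI')
  then have "P (op_sqrt G)" by (simp add: op_sqrt_def P_def)
  then show "clinear (op_sqrt G)" "hermitian (op_sqrt G)" "op_sqrt G (op_sqrt G x) = G x"
    unfolding P_iff by (auto simp: fun_eq_iff)
qed

lemma is_G_completionD:
  assumes "is_G_completion G J"
  shows "clinear J" "cinner (J x) (J y) = cinner (G x) y" "closure (range J) = UNIV"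
  using assms by (simp_all add: is_G_completion_def clinear_def)

lemma cond_iv_iff_cond_i:
  assumes "adj D A ` adj_dom D A \<subseteq> range G"
  shows "cond_iv D A G \<longleftrightarrow> cond_i D A G"
proof -
  have "{\<zeta> \<in> adj_dom D A. adj D A \<zeta> \<in> range G} = adj_dom D A" using assms by blast
  then show ?thesis by (simp add: cond_iv_def cond_i_def)
qed

locale metric_operator_setting =
  fixes D :: "'a::chilbert_space set" and A G :: "'a \<Rightarrow> 'a" and J :: "'a \<Rightarrow> 'b::chilbert_space"
  assumes densely_defined: "densely_defined D A" and metric: "bounded_metric_op G"
    and completion: "is_G_completion G J"
begin

abbreviation S :: "'a \<Rightarrow> 'a" where
  "S \<equiv> op_sqrt G"

lemma lin_op_A: "lin_op D A"
  using densely_defined by (simp add: densely_defined_def)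

lemma dense_D: "closure D = UNIV"
  using densely_defined by (simp add: densely_defined_def)

lemmas clinear_S = op_sqrtD(1)[OF metric]
  and S_S = op_sqrtD(3)[OF metric]
  and clinear_J = is_G_completionD(1)[OF completion]

lemma cinner_S: "cinner (S x) y = cinner x (S y)"
  using op_sqrtD(2)[OF metric] by (simp add: hermitian_def)

lemma cinner_G: "cinner (G x) y = cinner x (G y)"
  using bounded_metric_opD(3)[OF metric] by (simp add: hermitian_def)

lemma cinner_J_G: "cinner (J x) (J y) = cinner (G x) y"
  by (rule is_G_completionD(2)[OF completion])

lemma cinner_J_S: "cinner (J x) (J y) = cinner (S x) (S y)"
  using cinner_S[of "S x" y] by (simp add: cinner_J_G S_S)

lemma norm_J: "norm (J x) = norm (S x)"
  using cinner_J_S[of x x] by (metis Re_cinner_self norm_ge_zero power2_eq_iff_nonneg)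

lemma S_eq_zero_imp: "S w = 0 \<Longrightarrow> w = 0"
  using S_S[of w] bounded_metric_op_zero[OF metric, of w] clinear_zero[OF clinear_S] by simp

lemma inj_S: "inj S"
proof (rule injI)
  fix x y assume "S x = S y"
  then have "S (x - y) = 0" by (simp add: clinear_diff[OF clinear_S])
  then show "x = y" using S_eq_zero_imp[of "x - y"] by simp
qed

lemma inj_J: "inj J"
proof (rule injI)
  fix x y assume "J x = J y"
  then have "S (x - y) = 0"
    using norm_J[of "x - y"] by (simp add: clinear_diff[OF clinear_J] clinear_diff[OF clinear_S])
  then show "x = y" using S_eq_zero_imp[of "x - y"] by simp
qed

lemma surj_J_if_surj_S: "surj S \<Longrightarrow> surj J"
  using closed_range_if_norm_eq[OF clinear_S clinear_J norm_J[symmetric]]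
    is_G_completionD(3)[OF completion]
  by (metis closed_UNIV closure_closed)

lemma surj_S_if_surj_J:
  assumes "surj J"
  shows "surj S"
proof -
  have "closed (range S)"
    using closed_range_if_norm_eq[OF clinear_J clinear_S] norm_J assms by (metis closed_UNIV)
  moreover have "closure (range S) = UNIV"
  proof (rule dense_csubspace_if_orthogonal_trivial[OF csubspace_range[OF clinear_S]])
    fix w assume "\<And>m. m \<in> range S \<Longrightarrow> cinner m w = 0"
    then have "cinner (S w) (S w) = 0" by (simp add: cinner_S [symmetric])
    then show "w = 0" using S_eq_zero_imp cinner_eq_zero_iff by blast
  qed
  ultimately show ?thesis by (metis closure_closed)
qed

lemma surj_G_if_surj_S:
  assumes "surj S"
  shows "surj G"
proof -
  have "y \<in> range G" for y
  proof -
    obtain a where a: "y = S a" using assms by (metis surj_def)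
    obtain b where b: "a = S b" using assms by (metis surj_def)
    have "y = G b" by (simp add: a b S_S)
    then show ?thesis by blast
  qed
  then show ?thesis by blast
qed

lemma cond_i_imp_cond_ii:
  assumes "cond_i D A G"
  shows "cond_ii D A G"
  unfolding cond_ii_def
proof (rule self_adjoint_opI[OF lin_op_conj[OF lin_op_A clinear_S inj_S]])
  have GD: "G ` D = adj_dom D A" and GA: "\<And>\<xi>. \<xi> \<in> D \<Longrightarrow> adj D A (G \<xi>) = G (A \<xi>)"
    using assms by (auto simp: cond_i_def)
  have S_inv: "inv S (S x) = x" for x by (rule inv_f_f[OF inj_S])
  show "closure (S ` D) = UNIV"
  proof (rule dense_csubspace_if_orthogonal_trivial)
    show "csubspace (S ` D)"
      by (rule csubspace_if_lin_op[OF lin_op_conj[OF lin_op_A clinear_S inj_S]])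
  next
    fix w assume "\<And>m. m \<in> S ` D \<Longrightarrow> cinner m w = 0"
    then have "cinner \<xi> (S w) = 0" if "\<xi> \<in> D" for \<xi> using that by (simp add: cinner_S [symmetric])
    then have "S w = 0" by (rule orthogonal_dense_eq_zero[OF dense_D])
    then show "w = 0" by (rule S_eq_zero_imp)
  qed
  show "cinner (S (A (inv S \<xi>))) \<eta> = cinner \<xi> (S (A (inv S \<eta>)))"
    if xi: "\<xi> \<in> S ` D" and eta: "\<eta> \<in> S ` D" for \<xi> \<eta>
  proof -
    obtain x y where xy: "\<xi> = S x" "x \<in> D" "\<eta> = S y" "y \<in> D" using xi eta by blast
    have "G y \<in> adj_dom D A" using GD xy(4) by blast
    then have "cinner (A x) (G y) = cinner x (G (A y))"
      using cinner_adj[OF _ xy(2)] GA[OF xy(4)] by simp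
    then show ?thesis by (simp add: xy S_inv cinner_S S_S)
  qed
  show "\<eta> \<in> S ` D" if max: "\<And>\<xi>. \<xi> \<in> S ` D \<Longrightarrow> cinner (S (A (inv S \<xi>))) \<eta> = cinner \<xi> z" for \<eta> z
  proof -
    have "cinner (A x) (S \<eta>) = cinner x (S z)" if "x \<in> D" for x
      using max[of "S x"] that by (simp add: S_inv cinner_S)
    then have "S \<eta> \<in> adj_dom D A" using adj_domI[OF dense_D] by blast
    then obtain y where "y \<in> D" "S \<eta> = S (S y)" using GD by (metis S_S imageE)
    then show ?thesis using inj_S by (auto dest: injD)
  qed
qed

lemma cond_ii_imp_cond_iii:
  assumes "cond_ii D A G"
  shows "cond_iii D A J"
proof -
  have sa: "self_adjoint_op (S ` D) (\<lambda>\<eta>. S (A (inv S \<eta>)))" using assms by (simp add: cond_ii_def)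
  have "surj J" by (rule surj_J_if_surj_S[OF surj_if_self_adjoint_op_conj[OF sa clinear_S inj_S]])
  then show ?thesis
    unfolding cond_iii_def
    by (rule self_adjoint_op_conj_transfer[OF sa lin_op_A clinear_S inj_S clinear_J inj_J _
          cinner_J_S])
qed

lemma cond_iii_imp_surj_G:
  assumes "cond_iii D A J"
  shows "surj G"
  using surj_if_self_adjoint_op_conj[of J D A] assms clinear_J inj_J surj_S_if_surj_J
    surj_G_if_surj_S by (simp add: cond_iii_def)

lemma cond_iii_imp_cond_i:
  assumes "cond_iii D A J"
  shows "cond_i D A G"
proof -
  have sa: "self_adjoint_op (J ` D) (\<lambda>k. J (A (inv J k)))" using assms by (simp add: cond_iii_def)
  have J_inv: "inv J (J x) = x" for x by (rule inv_f_f[OF inj_J])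
  have adj_G: "G \<xi> \<in> adj_dom D A \<and> adj D A (G \<xi>) = G (A \<xi>)" if "\<xi> \<in> D" for \<xi>
  proof (rule adj_domI[OF dense_D])
    fix x assume "x \<in> D"
    then have "cinner (J (A x)) (J \<xi>) = cinner (J x) (J (A \<xi>))"
      using self_adjoint_op_symmetric[OF sa, of "J x" "J \<xi>"] that by (simp add: J_inv)
    then show "cinner (A x) (G \<xi>) = cinner x (G (A \<xi>))" by (simp add: cinner_J_G cinner_G)
  qed
  have "\<zeta> \<in> G ` D" if "\<zeta> \<in> adj_dom D A" for \<zeta>
  proof -
    obtain y w where yw: "\<zeta> = G y" "adj D A \<zeta> = G w"
      using cond_iii_imp_surj_G[OF assms] by (metis surj_def)
    have "cinner (J (A (inv J k))) (J y) = cinner k (J w)" if "k \<in> J ` D" for k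
    proof -
      obtain x where x: "k = J x" "x \<in> D" using \<open>k \<in> J ` D\<close> by blast
      have "cinner (A x) \<zeta> = cinner x (G w)"
        using cinner_adj[OF \<open>\<zeta> \<in> adj_dom D A\<close> x(2)] yw(2) by simp
      then show ?thesis by (simp add: x J_inv yw(1) cinner_J_G cinner_G)
    qed
    then have "J y \<in> J ` D" using self_adjoint_op_maximal[OF sa] by blast
    then show ?thesis using inj_J yw by (auto dest: injD)
  qed
  then show ?thesis using adj_G by (auto simp: cond_i_def)
qed

lemma cond_iii_imp_cond_iv:
  assumes "cond_iii D A J"
  shows "cond_iv D A G"
  using cond_iv_iff_cond_i[of D A G] cond_iii_imp_cond_i[OF assms] cond_iii_imp_surj_G[OF assms]
  by auto

end

theorem proposition3p12:
  fixes D :: "'a::chilbert_space set" and A G :: "'a \<Rightarrow> 'a"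
    and J :: "'a \<Rightarrow> 'b::chilbert_space"
  assumes "closed_op D A" and "densely_defined D A"
    and "bounded_metric_op G"
    and "is_G_completion G J"
  shows "(cond_i D A G \<longrightarrow> cond_ii D A G)
       \<and> (cond_ii D A G \<longrightarrow> cond_iii D A J)
       \<and> (cond_iii D A J \<longrightarrow> cond_iv D A G)
       \<and> (adj D A ` adj_dom D A \<subseteq> range G \<longrightarrow>
            (cond_i D A G \<longleftrightarrow> cond_ii D A G) \<and> (cond_ii D A G \<longleftrightarrow> cond_iii D A J)
            \<and> (cond_iii D A J \<longleftrightarrow> cond_iv D A G))"
proof -
  interpret metric_operator_setting D A G J
    using assms(2-4) by unfold_locales
  show ?thesis
    using cond_i_imp_cond_ii cond_ii_imp_cond_iii cond_iii_imp_cond_iv cond_iii_imp_cond_i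
      cond_iv_iff_cond_i
    by blast
qed

end
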